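(* Let $U$ be a nonconstant stationary solution. If the derivative $U_x$ has at least three zeros in $[0,1)$, then $U$ is linearly unstable.
   Context: $\mathbb{T}=[0,1]$ with endpoints identified; $D,\kappa>0$; stationary solutions $U\in W^{2,2}(\mathbb{T})$ solve $0=DU_{xx}-U+\kappa e^U/\int_0^1e^Udy$ with periodic boundary conditions. Linearization: $\mathcal L\varphi=D\varphi_{xx}+\big(\kappa\frac{e^U}{\int_0^1e^U}-1\big)\varphi-\kappa\frac{e^U}{(\int_0^1e^U)^2}\int_0^1e^U\varphi\,dy$ on $L^2(\mathbb{T})$, domain $W^{2,2}(\mathbb{T})$. $U$ is linearly unstable if $\mathcal L$ has an eigenvalue with positive real part. *)

theory Defs
  imports "HOL-Analysis.Analysis"
begin

text \<open>Functions on the torus T = [0,1]/{0~1} are represented as 1-periodic functions on the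
real line.  The periodic Sobolev space W^{2,2}(T) is described in the usual one-dimensional way:
f is 1-periodic and continuously differentiable, and its derivative is an indefinite integral of
a function g that is square integrable over one period; g is then the (a.e. determined) weak
second derivative of f.\<close>

definition per_weak_dd :: "(real \<Rightarrow> 'a::euclidean_space) \<Rightarrow> (real \<Rightarrow> 'a) \<Rightarrow> bool" where
  "per_weak_dd f g \<longleftrightarrow>
     (\<forall>x. f (x + 1) = f x) \<and>
     (\<exists>f'. (\<forall>x. (f has_vector_derivative f' x) (at x)) \<and>
           (\<forall>a b. a \<le> b \<longrightarrow> (g has_integral (f' b - f' a)) {a..b})) \<and>
     (\<lambda>x. (norm (g x))\<^sup>2) integrable_on {0..1}"

definition W22_per :: "(real \<Rightarrow> 'a::euclidean_space) \<Rightarrow> bool" where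
  "W22_per f \<longleftrightarrow> (\<exists>g. per_weak_dd f g)"

definition stationary_solution :: "real \<Rightarrow> real \<Rightarrow> (real \<Rightarrow> real) \<Rightarrow> bool" where
  "stationary_solution D \<kappa> U \<longleftrightarrow>
     (\<exists>g. per_weak_dd U g \<and>
        (AE x in lebesgue. D * g x - U x + \<kappa> * exp (U x) / integral {0..1} (\<lambda>y. exp (U y)) = 0))"

text \<open>The linearization L on L^2(T) (complexified), domain W^{2,2}(T).
lambda is an eigenvalue iff there is a nonzero phi in the domain with L phi = lambda phi
(in L^2, i.e. almost everywhere).  Domain elements are continuous, so nonzero in L^2 is the same
as not identically zero.\<close>

definition lin_eigenvalue :: "real \<Rightarrow> real \<Rightarrow> (real \<Rightarrow> real) \<Rightarrow> complex \<Rightarrow> bool" where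
  "lin_eigenvalue D \<kappa> U \<mu> \<longleftrightarrow>
     (let I = integral {0..1} (\<lambda>y. exp (U y)) in
      \<exists>\<phi> g. per_weak_dd \<phi> g \<and> \<phi> \<noteq> (\<lambda>_. 0) \<and>
        (AE x in lebesgue.
           of_real D * g x + of_real (\<kappa> * exp (U x) / I - 1) * \<phi> x
           - of_real (\<kappa> * exp (U x) / I\<^sup>2) * integral {0..1} (\<lambda>y. of_real (exp (U y)) * \<phi> y)
           = \<mu> * \<phi> x))"

definition linearly_unstable :: "real \<Rightarrow> real \<Rightarrow> (real \<Rightarrow> real) \<Rightarrow> bool" where
  "linearly_unstable D \<kappa> U \<longleftrightarrow> (\<exists>\<mu>. lin_eigenvalue D \<kappa> U \<mu> \<and> Re \<mu> > 0)"

end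

theory Submission
  imports Defs
begin

text \<open>
  A stationary solution is a classical solution of the autonomous equation
  D U'' = U - \<kappa> e^U / I (I the integral of e^U over a period), so reflection in a critical point a
  is a symmetry of it: U is even about a and, by periodicity, about a + 1/2.  Three critical points
  in one period give a second critical point c with a < c < a + 1/2.

  On functions that are odd about a the nonlocal term of the linearization vanishes (e^U is even),
  and the linearization becomes \<phi> \<mapsto> D (\<phi>'' - pot \<phi>) with pot = F'(U).  Shoot from a: let y_l solve
  y'' = (l + pot) y, y(a) = 0, y'(a) = 1.  Then y_0 = U' / U''(a) vanishes at c, whereas for large l
  the solution never returns to zero.  By continuous dependence on l, at the supremum l* of the
  parameters for which y_l vanishes in (a, a + 1/2) the solution vanishes exactly at a + 1/2.  Its
  odd extension about a is then odd about a + 1/2 as well, hence 1-periodic and orthogonal to e^U,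
  and it is an eigenfunction with eigenvalue D l* > 0.
\<close>

section \<open>Energy estimates for linear second order equations\<close>

lemma has_real_derivative_nonneg_imp_le:
  fixes f f' :: "real \<Rightarrow> real"
  assumes der: "\<And>t. t \<in> {c..d} \<Longrightarrow> (f has_real_derivative f' t) (at t within {c..d})"
    and nonneg: "\<And>t. t \<in> {c..d} \<Longrightarrow> 0 \<le> f' t"
    and x: "x \<in> {c..d}"
  shows "f c \<le> f x"
proof -
  have "(f has_real_derivative f' t) (at t within {c..x})" if "t \<in> {c..x}" for t
    by (rule has_field_derivative_subset[OF der]) (use that x in auto)
  then have "\<exists>t\<in>{c..x}. f x - f c = (\<lambda>h. f' t * h) (x - c)"
    using x by (intro mvt_very_simple) (auto simp: has_field_derivative_def)
  then obtain t where t: "t \<in> {c..x}" "f x - f c = f' t * (x - c)" by auto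
  have "0 \<le> f' t * (x - c)" using nonneg[of t] t(1) x by (intro mult_nonneg_nonneg) auto
  with t(2) show ?thesis by linarith
qed

lemma gronwall_forward:
  fixes E E' :: "real \<Rightarrow> real"
  assumes der: "\<And>t. t \<in> {c..d} \<Longrightarrow> (E has_real_derivative E' t) (at t within {c..d})"
    and growth: "\<And>t. t \<in> {c..d} \<Longrightarrow> E' t \<le> K * E t + B"
    and "0 \<le> K" "0 \<le> B" and x: "x \<in> {c..d}"
  shows "E x \<le> (E c + B * (x - c)) * exp (K * (x - c))"
proof -
  define G where "G t = E c + B * (t - c) - exp (- K * (t - c)) * E t" for t
  have "G c \<le> G x"
  proof (rule has_real_derivative_nonneg_imp_le[OF _ _ x])
    fix t assume t: "t \<in> {c..d}"
    show "(G has_real_derivative B - exp (- K * (t - c)) * (E' t - K * E t)) (at t within {c..d})"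
      unfolding G_def using der[OF t] by (auto intro!: derivative_eq_intros simp: algebra_simps)
    have "exp (- K * (t - c)) \<le> 1" using t \<open>0 \<le> K\<close> by simp
    moreover have "E' t - K * E t \<le> B" using growth[OF t] by simp
    ultimately have "exp (- K * (t - c)) * (E' t - K * E t) \<le> B"
      using \<open>0 \<le> B\<close> mult_left_le_one_le[of "E' t - K * E t" "exp (- K * (t - c))"]
        mult_pos_neg[of "exp (- K * (t - c))" "E' t - K * E t"]
      by (cases "0 \<le> E' t - K * E t") auto
    then show "0 \<le> B - exp (- K * (t - c)) * (E' t - K * E t)" by simp
  qed
  then have "exp (- K * (x - c)) * E x \<le> E c + B * (x - c)" by (simp add: G_def)
  then have "exp (K * (x - c)) * (exp (- K * (x - c)) * E x) \<le> exp (K * (x - c)) * (E c + B * (x - c))"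
    by (rule mult_left_mono) simp
  moreover have "exp (K * (x - c)) * (exp (- K * (x - c)) * E x) = E x"
    by (simp add: mult.assoc[symmetric] flip: exp_add)
  ultimately have "E x \<le> exp (K * (x - c)) * (E c + B * (x - c))" by linarith
  then show ?thesis by (simp only: mult.commute)
qed

lemma gronwall_backward:
  fixes E E' :: "real \<Rightarrow> real"
  assumes der: "\<And>t. t \<in> {c..d} \<Longrightarrow> (E has_real_derivative E' t) (at t within {c..d})"
    and decay: "\<And>t. t \<in> {c..d} \<Longrightarrow> - K * E t \<le> E' t"
    and x: "x \<in> {c..d}"
  shows "E x \<le> E d * exp (K * (d - x))"
proof -
  define G where "G t = exp (K * t) * E t" for t
  have "G x \<le> G d"
  proof (rule has_real_derivative_nonneg_imp_le[where c = x and d = d])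
    fix t assume t: "t \<in> {x..d}"
    then have "t \<in> {c..d}" using x by simp
    show "(G has_real_derivative exp (K * t) * (E' t + K * E t)) (at t within {x..d})"
      unfolding G_def using has_field_derivative_subset[OF der[OF \<open>t \<in> {c..d}\<close>], of "{x..d}"] x
      by (auto intro!: derivative_eq_intros simp: algebra_simps)
    show "0 \<le> exp (K * t) * (E' t + K * E t)" using decay[OF \<open>t \<in> {c..d}\<close>] by simp
  qed (use x in auto)
  then have "exp (- (K * x)) * (exp (K * x) * E x) \<le> exp (- (K * x)) * (exp (K * d) * E d)"
    unfolding G_def by (rule mult_left_mono) simp
  then have "E x * exp (K * x) \<le> E d * exp (K * d)" by (simp add: exp_minus field_simps)
  then show ?thesis by (simp add: right_diff_distrib exp_diff field_simps)
qed

lemma energy_derivative_bound: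
  fixes w u z L e :: real
  assumes z: "\<bar>z\<bar> \<le> L * \<bar>w\<bar> + e" and "0 \<le> L"
  shows "\<bar>2 * w * u + 2 * u * z\<bar> \<le> (2 + L) * (w\<^sup>2 + u\<^sup>2) + e\<^sup>2"
proof -
  have uw: "2 * \<bar>u\<bar> * \<bar>w\<bar> \<le> u\<^sup>2 + w\<^sup>2" and ue: "2 * \<bar>u\<bar> * \<bar>e\<bar> \<le> u\<^sup>2 + e\<^sup>2"
    using sum_squares_bound[of "\<bar>u\<bar>" "\<bar>w\<bar>"] sum_squares_bound[of "\<bar>u\<bar>" "\<bar>e\<bar>"] by simp_all
  have "\<bar>2 * w * u + 2 * u * z\<bar> \<le> 2 * \<bar>u\<bar> * \<bar>w\<bar> + 2 * \<bar>u\<bar> * \<bar>z\<bar>"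
    using abs_triangle_ineq[of "2 * w * u" "2 * u * z"] by (simp add: abs_mult mult_ac)
  also have "\<dots> \<le> 2 * \<bar>u\<bar> * \<bar>w\<bar> + L * (2 * \<bar>u\<bar> * \<bar>w\<bar>) + 2 * \<bar>u\<bar> * \<bar>e\<bar>"
  proof -
    have "2 * \<bar>u\<bar> * \<bar>z\<bar> \<le> 2 * \<bar>u\<bar> * (L * \<bar>w\<bar> + \<bar>e\<bar>)"
      using z by (intro mult_left_mono) auto
    then show ?thesis by (simp add: algebra_simps)
  qed
  also have "\<dots> \<le> (u\<^sup>2 + w\<^sup>2) + L * (u\<^sup>2 + w\<^sup>2) + (u\<^sup>2 + e\<^sup>2)"
    using uw ue mult_left_mono[OF uw \<open>0 \<le> L\<close>] by linarith
  also have "\<dots> \<le> (2 + L) * (w\<^sup>2 + u\<^sup>2) + e\<^sup>2"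
    by (simp add: algebra_simps)
  finally show ?thesis .
qed

lemma second_order_energy_bound:
  fixes w u z :: "real \<Rightarrow> real"
  assumes dw: "\<And>t. t \<in> {c..d} \<Longrightarrow> (w has_real_derivative u t) (at t within {c..d})"
    and du: "\<And>t. t \<in> {c..d} \<Longrightarrow> (u has_real_derivative z t) (at t within {c..d})"
    and z: "\<And>t. t \<in> {c..d} \<Longrightarrow> \<bar>z t\<bar> \<le> L * \<bar>w t\<bar> + e"
    and "0 \<le> L" and x: "x \<in> {c..d}"
  shows "(w x)\<^sup>2 + (u x)\<^sup>2 \<le> ((w c)\<^sup>2 + (u c)\<^sup>2 + e\<^sup>2 * (x - c)) * exp ((2 + L) * (x - c))"
proof (rule gronwall_forward[where E = "\<lambda>t. (w t)\<^sup>2 + (u t)\<^sup>2", OF _ _ _ _ x])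
  fix t assume t: "t \<in> {c..d}"
  show "((\<lambda>t. (w t)\<^sup>2 + (u t)\<^sup>2) has_real_derivative 2 * w t * u t + 2 * u t * z t) (at t within {c..d})"
    using dw[OF t] du[OF t] by (auto intro!: derivative_eq_intros)
  show "2 * w t * u t + 2 * u t * z t \<le> (2 + L) * ((w t)\<^sup>2 + (u t)\<^sup>2) + e\<^sup>2"
    using abs_le_D1[OF energy_derivative_bound[OF z[OF t] \<open>0 \<le> L\<close>, of "u t"]] .
qed (use \<open>0 \<le> L\<close> in auto)

lemma second_order_unique_forward:
  fixes w u z :: "real \<Rightarrow> real"
  assumes dw: "\<And>t. t \<in> {c..d} \<Longrightarrow> (w has_real_derivative u t) (at t within {c..d})"
    and du: "\<And>t. t \<in> {c..d} \<Longrightarrow> (u has_real_derivative z t) (at t within {c..d})"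
    and z: "\<And>t. t \<in> {c..d} \<Longrightarrow> \<bar>z t\<bar> \<le> L * \<bar>w t\<bar>"
    and "0 \<le> L" and "w c = 0" "u c = 0" and x: "x \<in> {c..d}"
  shows "w x = 0"
proof -
  have "(w x)\<^sup>2 + (u x)\<^sup>2 \<le> 0"
    using second_order_energy_bound[OF dw du _ \<open>0 \<le> L\<close> x, of 0] z \<open>w c = 0\<close> \<open>u c = 0\<close>
    by simp
  then show ?thesis by (simp add: sum_power2_le_zero_iff)
qed

lemma second_order_unique_backward:
  fixes w u z :: "real \<Rightarrow> real"
  assumes dw: "\<And>t. t \<in> {c..d} \<Longrightarrow> (w has_real_derivative u t) (at t within {c..d})"
    and du: "\<And>t. t \<in> {c..d} \<Longrightarrow> (u has_real_derivative z t) (at t within {c..d})"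
    and z: "\<And>t. t \<in> {c..d} \<Longrightarrow> \<bar>z t\<bar> \<le> L * \<bar>w t\<bar>"
    and "0 \<le> L" and "w d = 0" "u d = 0" and x: "x \<in> {c..d}"
  shows "w x = 0 \<and> u x = 0"
proof -
  have "(w x)\<^sup>2 + (u x)\<^sup>2 \<le> ((w d)\<^sup>2 + (u d)\<^sup>2) * exp ((2 + L) * (d - x))"
  proof (rule gronwall_backward[where E = "\<lambda>t. (w t)\<^sup>2 + (u t)\<^sup>2", OF _ _ x])
    fix t assume t: "t \<in> {c..d}"
    show "((\<lambda>t. (w t)\<^sup>2 + (u t)\<^sup>2) has_real_derivative 2 * w t * u t + 2 * u t * z t) (at t within {c..d})"
      using dw[OF t] du[OF t] by (auto intro!: derivative_eq_intros)
    have "\<bar>2 * w t * u t + 2 * u t * z t\<bar> \<le> (2 + L) * ((w t)\<^sup>2 + (u t)\<^sup>2)"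
      using energy_derivative_bound[of "z t" L "w t" 0 "u t"] z[OF t] \<open>0 \<le> L\<close> by simp
    then show "- (2 + L) * ((w t)\<^sup>2 + (u t)\<^sup>2) \<le> 2 * w t * u t + 2 * u t * z t"
      using abs_le_D2 by (simp only: mult_minus_left minus_le_iff)
  qed
  then have "(w x)\<^sup>2 + (u x)\<^sup>2 \<le> 0" using \<open>w d = 0\<close> \<open>u d = 0\<close> by simp
  then show ?thesis by (simp add: sum_power2_le_zero_iff)
qed

lemma second_order_unique:
  fixes w u z :: "real \<Rightarrow> real"
  assumes dw: "\<And>t. (w has_real_derivative u t) (at t)"
    and du: "\<And>t. (u has_real_derivative z t) (at t)"
    and z: "\<And>t. \<bar>z t\<bar> \<le> L * \<bar>w t\<bar>"
    and "0 \<le> L" and "w m = 0" "u m = 0"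
  shows "w x = 0"
proof (cases "m \<le> x")
  case True
  show ?thesis
    by (rule second_order_unique_forward[where c = m and d = x and w = w and u = u and z = z and L = L])
      (use assms True in \<open>auto intro: has_field_derivative_at_within\<close>)
next
  case False
  have "w x = 0 \<and> u x = 0"
    by (rule second_order_unique_backward[where c = x and d = m and w = w and u = u and z = z and L = L])
      (use assms False in \<open>auto intro: has_field_derivative_at_within\<close>)
  then show ?thesis ..
qed

lemma has_real_derivative_reflect:
  assumes "(f has_real_derivative f') (at (2 * a - y) within (\<lambda>x. 2 * a - x) ` S)"
  shows "((\<lambda>x. f (2 * a - x)) has_real_derivative - f') (at y within S)"
proof -
  have "((\<lambda>x. 2 * a - x) has_real_derivative -1) (at y within S)"
    by (auto intro!: derivative_eq_intros)
  from DERIV_image_chain[OF assms this] show ?thesis by (simp add: o_def)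
qed

lemma second_order_reflection_symmetric:
  fixes f f' f'' :: "real \<Rightarrow> real"
  assumes df: "\<And>x. (f has_real_derivative f' x) (at x)"
    and df': "\<And>x. (f' has_real_derivative f'' x) (at x)"
    and lip: "\<And>x. \<bar>f'' x - s * f'' (2 * m - x)\<bar> \<le> L * \<bar>f x - s * f (2 * m - x)\<bar>"
    and "0 \<le> L" and "f m = s * f m" and "f' m = - s * f' m"
  shows "f x = s * f (2 * m - x)"
proof -
  have reflect: "((\<lambda>t. g (2 * m - t)) has_real_derivative - g' (2 * m - t)) (at t)"
    if "\<And>x. (g has_real_derivative g' x) (at x)" for g g' :: "real \<Rightarrow> real" and t
    using has_real_derivative_reflect[where f = g and f' = "g' (2 * m - t)" and a = m and y = t
        and S = UNIV] that by simp
  have "f x - s * f (2 * m - x) = 0"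
  proof (rule second_order_unique[where w = "\<lambda>t. f t - s * f (2 * m - t)"
        and u = "\<lambda>t. f' t + s * f' (2 * m - t)" and z = "\<lambda>t. f'' t - s * f'' (2 * m - t)"
        and L = L and m = m, OF _ _ lip \<open>0 \<le> L\<close>])
    show "((\<lambda>t. f t - s * f (2 * m - t)) has_real_derivative f' t + s * f' (2 * m - t)) (at t)" for t
      using DERIV_diff[OF df DERIV_cmult[OF reflect[OF df], of s]] by simp
    show "((\<lambda>t. f' t + s * f' (2 * m - t)) has_real_derivative f'' t - s * f'' (2 * m - t)) (at t)" for t
      using DERIV_add[OF df' DERIV_cmult[OF reflect[OF df'], of s]] by simp
  qed (use assms in auto)
  then show ?thesis by simp
qed

section \<open>Periodicity, reflections and sign changes\<close>

lemma periodic_shift_int: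
  assumes per: "\<And>x. f (x + 1) = f x"
  shows "f (x + of_int n) = f x"
proof (induction n rule: int_induct[where k = 0])
  case (step1 i)
  then show ?case using per[of "x + of_int i"] by (simp add: add.assoc)
next
  case (step2 i)
  then show ?case using per[of "x + of_int (i - 1)"] by (simp add: add.assoc)
qed simp

lemma periodic_bounded:
  fixes f :: "real \<Rightarrow> 'a::real_normed_vector"
  assumes "continuous_on UNIV f" and per: "\<And>x. f (x + 1) = f x"
  obtains B where "\<And>x. norm (f x) \<le> B"
proof -
  have "bounded (f ` {0..1})"
    using assms(1) by (intro compact_imp_bounded compact_continuous_image) (auto intro: continuous_on_subset)
  then obtain B where B: "\<forall>y\<in>{0..1}. norm (f y) \<le> B" by (auto simp: bounded_iff)
  have "norm (f x) \<le> B" for x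
  proof -
    have "f x = f (frac x)"
      using periodic_shift_int[of f "frac x" "\<lfloor>x\<rfloor>", OF per] by (simp add: frac_def)
    moreover have "frac x \<in> {0..1}" using frac_ge_0[of x] frac_lt_1[of x] by simp
    ultimately show ?thesis using B by simp
  qed
  then show ?thesis by (rule that)
qed

lemma periodic_derivative:
  assumes per: "\<And>x. f (x + 1) = f x" and df: "\<And>x. (f has_real_derivative f' x) (at x)"
  shows "f' (x + 1) = f' x"
proof -
  have "((\<lambda>x. x + 1) has_real_derivative 1) (at x)" by (auto intro!: derivative_eq_intros)
  from DERIV_chain2[OF df this] have "((\<lambda>x. f (x + 1)) has_real_derivative f' (x + 1)) (at x)"
    by simp
  then show ?thesis using per DERIV_unique[OF _ df[of x]] by simp
qed

lemma integral_periodic_odd: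
  fixes h :: "real \<Rightarrow> real"
  assumes cont: "continuous_on UNIV h" and per: "\<And>x. h (x + 1) = h x"
    and odd: "\<And>x. h (2 * a + 1 - x) = - h x" and a: "0 \<le> a" "a \<le> 1"
  shows "(h has_integral 0) {0..1}"
proof -
  have int: "h integrable_on {s..t}" for s t
    by (rule integrable_continuous_real[OF continuous_on_subset[OF cont]]) auto
  have "integral {1..a + 1} h = integral {0..a} h"
    using integral_shift_Icc_real[of 0 a h 1] per by (simp add: o_def add.commute)
  then have period: "integral {0..1} h = integral {a..a + 1} h"
    using Henstock_Kurzweil_Integration.integral_combine[OF _ _ int, of 0 a 1]
      Henstock_Kurzweil_Integration.integral_combine[OF _ _ int, of a 1 "a + 1"] a
    by simp
  have "integral {a..a + 1} (\<lambda>x. h (2 * a + 1 - x)) = integral {a..a + 1} h"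
  proof -
    have "integral {- (- a)..- (- (a + 1))} (\<lambda>x. h (2 * a + 1 + - x))
        = integral {- (a + 1)..- a} (\<lambda>x. h (2 * a + 1 + x))"
      by (rule Henstock_Kurzweil_Integration.integral_reflect_real)
    then have "integral {a..a + 1} (\<lambda>x. h (2 * a + 1 - x))
        = integral {- (a + 1)..- a} (\<lambda>x. h (2 * a + 1 + x))"
      by (simp add: add.commute)
    also have "\<dots> = integral {a..a + 1} h"
      using integral_shift_Icc_real[of "- (a + 1)" "- a" h "2 * a + 1"] by (simp add: o_def add.commute)
    finally show ?thesis .
  qed
  then have "integral {a..a + 1} h = 0" by (simp add: odd integral_neg)
  then show ?thesis using period int[of 0 1] by (simp add: has_integral_integral)
qed

lemma has_real_derivative_glue:
  assumes "(f has_real_derivative D) (at x within {..x})"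
    and "(f has_real_derivative D) (at x within {x..})"
  shows "(f has_real_derivative D) (at x)"
proof -
  have "(f has_real_derivative D) (at x within ({..x} \<union> {x..}))"
    using assms unfolding has_field_derivative_iff by (simp add: Lim_within_Un)
  moreover have "{..x} \<union> {x..} = UNIV" by auto
  ultimately show ?thesis by simp
qed

lemma reflected_extension_has_real_derivative:
  fixes f f' :: "real \<Rightarrow> real"
  assumes der: "\<And>t. a \<le> t \<Longrightarrow> (f has_real_derivative f' t) (at t within {a..})"
    and "f a = s * f a" and "f' a = - s * f' a"
  shows "((\<lambda>x. if a \<le> x then f x else s * f (2 * a - x)) has_real_derivative
      (if a \<le> x then f' x else - s * f' (2 * a - x))) (at x)"
    (is "(?g has_real_derivative ?g' x) _")
proof -
  have reflect: "((\<lambda>x. s * f (2 * a - x)) has_real_derivative - s * f' (2 * a - y)) (at y within S)"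
    if "(f has_real_derivative f' (2 * a - y)) (at (2 * a - y) within (\<lambda>x. 2 * a - x) ` S)" for S y
    using DERIV_cmult[OF has_real_derivative_reflect[OF that], of s] by simp
  consider "a < x" | "x < a" | "x = a" by linarith
  then show ?thesis
  proof cases
    case 1
    have "at x within {a..} = at x" using 1 by (intro at_within_interior) simp
    then have "(f has_real_derivative f' x) (at x)" using der[of x] 1 by simp
    then have "(?g has_real_derivative f' x) (at x)"
      by (rule has_field_derivative_transform_within_open[where S = "{a<..}"]) (use 1 in auto)
    then show ?thesis using 1 by simp
  next
    case 2
    have "at (2 * a - x) within {a..} = at (2 * a - x)" using 2 by (intro at_within_interior) simp
    then have "(f has_real_derivative f' (2 * a - x)) (at (2 * a - x))" using der[of "2 * a - x"] 2 by simp
    from reflect[where S = UNIV and y = x] this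
    have "((\<lambda>x. s * f (2 * a - x)) has_real_derivative - s * f' (2 * a - x)) (at x)"
      by simp
    then have "(?g has_real_derivative - s * f' (2 * a - x)) (at x)"
      by (rule has_field_derivative_transform_within_open[where S = "{..<a}"]) (use 2 in auto)
    then show ?thesis using 2 by simp
  next
    case 3
    have "(?g has_real_derivative f' a) (at a within {a..})"
      by (rule has_field_derivative_transform_within[OF der[of a] zero_less_one]) auto
    moreover have "(?g has_real_derivative f' a) (at a within {..a})"
    proof -
      have "(\<lambda>x. 2 * a - x) ` {..a} = {a..}"
        by (auto intro!: image_eqI[where x = "2 * a - y" for y])
      then have "((\<lambda>x. s * f (2 * a - x)) has_real_derivative f' a) (at a within {..a})"
        using reflect[where S = "{..a}" and y = a] der[of a] assms(3) by simp
      then show ?thesis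
        by (rule has_field_derivative_transform_within[OF _ zero_less_one]) (use assms(2) in auto)
    qed
    ultimately show ?thesis using 3 has_real_derivative_glue by simp
  qed
qed

lemma sign_change_at_simple_zero:
  fixes f :: "real \<Rightarrow> real"
  assumes der: "(f has_real_derivative f') (at x0)" and "f x0 = 0" and "f' \<noteq> 0" and "0 < e"
  obtains x1 x2 where "x0 - e < x1" "x1 < x0" "x0 < x2" "x2 < x0 + e" "f x1 * f x2 < 0"
proof -
  have "\<exists>d>0. \<forall>h. 0 < h \<and> h < d \<longrightarrow> f (x0 - h) * f (x0 + h) < 0"
  proof (cases "0 < f'")
    case True
    obtain d1 where "d1 > 0" "\<And>h. 0 < h \<Longrightarrow> h < d1 \<Longrightarrow> f x0 < f (x0 + h)"
      using DERIV_pos_inc_right[OF der True] by blast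
    moreover obtain d2 where "d2 > 0" "\<And>h. 0 < h \<Longrightarrow> h < d2 \<Longrightarrow> f (x0 - h) < f x0"
      using DERIV_pos_inc_left[OF der True] by blast
    ultimately show ?thesis using \<open>f x0 = 0\<close>
      by (intro exI[of _ "min d1 d2"]) (auto simp: mult_neg_pos)
  next
    case False
    then have "f' < 0" using \<open>f' \<noteq> 0\<close> by simp
    obtain d1 where "d1 > 0" "\<And>h. 0 < h \<Longrightarrow> h < d1 \<Longrightarrow> f (x0 + h) < f x0"
      using DERIV_neg_dec_right[OF der \<open>f' < 0\<close>] by blast
    moreover obtain d2 where "d2 > 0" "\<And>h. 0 < h \<Longrightarrow> h < d2 \<Longrightarrow> f x0 < f (x0 - h)"
      using DERIV_neg_dec_left[OF der \<open>f' < 0\<close>] by blast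
    ultimately show ?thesis using \<open>f x0 = 0\<close>
      by (intro exI[of _ "min d1 d2"]) (auto simp: mult_pos_neg)
  qed
  then obtain d where "0 < d" and d: "\<And>h. 0 < h \<Longrightarrow> h < d \<Longrightarrow> f (x0 - h) * f (x0 + h) < 0"
    by blast
  define h where "h = min d e / 2"
  have "0 < h" "h < d" "h < e" using \<open>0 < d\<close> \<open>0 < e\<close> by (auto simp: h_def)
  then show ?thesis using d[of h] by (intro that[of "x0 - h" "x0 + h"]) auto
qed

lemma product_neg_imp_zero:
  fixes f :: "real \<Rightarrow> real"
  assumes "x1 \<le> x2" and "continuous_on {x1..x2} f" and "f x1 * f x2 < 0"
  obtains x where "x \<in> {x1..x2}" "f x = 0"
proof (cases "f x1 < 0")
  case True
  then have "0 < f x2" using assms(3) by (simp add: mult_less_0_iff)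
  then show ?thesis using IVT'[of f x1 0 x2] assms True that by force
next
  case False
  then have "0 < f x1" "f x2 < 0" using assms(3) by (auto simp: mult_less_0_iff)
  then show ?thesis using IVT2'[of f x2 0 x1] assms that by force
qed

lemma mult_pos_if_abs_diff_less: "\<bar>x - y\<bar> < \<bar>y\<bar> \<Longrightarrow> 0 < x * (y::real)"
  by (cases "0 < y") (auto simp: zero_less_mult_iff abs_if split: if_splits)

section \<open>Shooting solutions of y'' = p y\<close>

definition shooting_solution ::
    "(real \<Rightarrow> real) \<Rightarrow> real \<Rightarrow> (real \<Rightarrow> real) \<Rightarrow> (real \<Rightarrow> real) \<Rightarrow> bool"
  where "shooting_solution p a y v \<longleftrightarrow> y a = 0 \<and> v a = 1 \<and>
    (\<forall>t\<ge>a. (y has_real_derivative v t) (at t within {a..}) \<and>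
            (v has_real_derivative p t * y t) (at t within {a..}))"

fun picard :: "(real \<Rightarrow> real) \<Rightarrow> real \<Rightarrow> nat \<Rightarrow> (real \<Rightarrow> real) \<times> (real \<Rightarrow> real)"
  where
  "picard p a 0 = (\<lambda>x. 0, \<lambda>x. 1)"
| "picard p a (Suc k) = (\<lambda>x. integral {a..x} (snd (picard p a k)),
                         \<lambda>x. 1 + integral {a..x} (\<lambda>s. p s * fst (picard p a k) s))"

lemma picard_continuous:
  assumes p: "continuous_on UNIV p"
  shows "continuous_on {a..b} (fst (picard p a k)) \<and> continuous_on {a..b} (snd (picard p a k))"
proof (induction k arbitrary: b)
  case (Suc k)
  have "continuous_on {a..b} (\<lambda>s. p s * fst (picard p a k) s)"
    using Suc p by (intro continuous_intros) (auto intro: continuous_on_subset)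
  then show ?case
    using indefinite_integral_continuous_1[OF integrable_continuous_real] Suc
    by (auto intro!: continuous_intros)
qed simp

lemma has_integral_power_div_fact:
  fixes C :: real
  assumes "a \<le> x"
  shows "((\<lambda>s. C * ((C * (s - a)) ^ Suc k / fact (Suc k))) has_integral
      (C * (x - a)) ^ Suc (Suc k) / fact (Suc (Suc k))) {a..x}"
proof -
  have "((\<lambda>s. C * ((C * (s - a)) ^ Suc k / fact (Suc k))) has_integral
      (C * (x - a)) ^ Suc (Suc k) / fact (Suc (Suc k)) - (C * (a - a)) ^ Suc (Suc k) / fact (Suc (Suc k)))
      {a..x}"
  proof (rule fundamental_theorem_of_calculus[OF assms])
    fix s assume "s \<in> {a..x}"
    have "((\<lambda>s. C * (s - a)) has_real_derivative C) (at s within {a..x})"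
      by (auto intro!: derivative_eq_intros)
    from DERIV_cdivide[OF DERIV_power[OF this, of "Suc (Suc k)"], of "fact (Suc (Suc k))"]
    have "((\<lambda>s. (C * (s - a)) ^ Suc (Suc k) / fact (Suc (Suc k))) has_real_derivative
        real (Suc (Suc k)) * (C * (C * (s - a)) ^ Suc k) / fact (Suc (Suc k))) (at s within {a..x})"
      by simp
    moreover have "real (Suc (Suc k)) * (C * (C * (s - a)) ^ Suc k) / fact (Suc (Suc k))
        = C * ((C * (s - a)) ^ Suc k / fact (Suc k))"
      unfolding fact_Suc[of "Suc k"] by (simp del: fact_Suc)
    ultimately show "((\<lambda>s. (C * (s - a)) ^ Suc (Suc k) / fact (Suc (Suc k))) has_vector_derivative
        C * ((C * (s - a)) ^ Suc k / fact (Suc k))) (at s within {a..x})"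
      by (simp add: has_real_derivative_iff_has_vector_derivative)
  qed
  then show ?thesis by simp
qed

lemma picard_Suc_diff:
  assumes p: "continuous_on UNIV p"
  shows "fst (picard p a (Suc (Suc k))) x - fst (picard p a (Suc k)) x
      = integral {a..x} (\<lambda>s. snd (picard p a (Suc k)) s - snd (picard p a k) s)"
    and "snd (picard p a (Suc (Suc k))) x - snd (picard p a (Suc k)) x
      = integral {a..x} (\<lambda>s. p s * (fst (picard p a (Suc k)) s - fst (picard p a k) s))"
proof -
  have int: "f integrable_on {a..x}" if "continuous_on {a..x} f" for f :: "real \<Rightarrow> real"
    using that by (rule integrable_continuous_real)
  have cont: "continuous_on {a..x} (fst (picard p a j))" "continuous_on {a..x} (snd (picard p a j))"
    "continuous_on {a..x} p" for j
    using picard_continuous[OF p, of a x j] p by (auto intro: continuous_on_subset simp del: picard.simps)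
  have "fst (picard p a (Suc (Suc k))) x - fst (picard p a (Suc k)) x
      = integral {a..x} (snd (picard p a (Suc k))) - integral {a..x} (snd (picard p a k))"
    by (simp only: picard.simps(2) fst_conv)
  also have "\<dots> = integral {a..x} (\<lambda>s. snd (picard p a (Suc k)) s - snd (picard p a k) s)"
    using cont by (intro integral_diff[symmetric] int)
  finally show "fst (picard p a (Suc (Suc k))) x - fst (picard p a (Suc k)) x
      = integral {a..x} (\<lambda>s. snd (picard p a (Suc k)) s - snd (picard p a k) s)" .
  have "snd (picard p a (Suc (Suc k))) x - snd (picard p a (Suc k)) x
      = integral {a..x} (\<lambda>s. p s * fst (picard p a (Suc k)) s)
        - integral {a..x} (\<lambda>s. p s * fst (picard p a k) s)"
    by (simp only: picard.simps(2) snd_conv)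
  also have "\<dots> = integral {a..x} (\<lambda>s. p s * (fst (picard p a (Suc k)) s - fst (picard p a k) s))"
    unfolding right_diff_distrib using cont by (intro integral_diff[symmetric] int continuous_intros)
  finally show "snd (picard p a (Suc (Suc k))) x - snd (picard p a (Suc k)) x
      = integral {a..x} (\<lambda>s. p s * (fst (picard p a (Suc k)) s - fst (picard p a k) s))" .
qed

lemma picard_step_bound:
  assumes p: "continuous_on UNIV p" and bound: "\<And>t. a \<le> t \<Longrightarrow> \<bar>p t\<bar> \<le> K" and "0 \<le> K"
    and "a \<le> x"
  shows "\<bar>fst (picard p a (Suc k)) x - fst (picard p a k) x\<bar>
       + \<bar>snd (picard p a (Suc k)) x - snd (picard p a k) x\<bar> \<le> ((1 + K) * (x - a)) ^ Suc k / fact (Suc k)"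
  using \<open>a \<le> x\<close>
proof (induction k arbitrary: x)
  case 0
  have "(x - a) * 1 \<le> (x - a) * (1 + K)" using 0 \<open>0 \<le> K\<close> by (intro mult_left_mono) auto
  then show ?case using 0 by (simp add: mult.commute)
next
  case (Suc k)
  define dy where "dy s = fst (picard p a (Suc k)) s - fst (picard p a k) s" for s
  define dv where "dv s = snd (picard p a (Suc k)) s - snd (picard p a k) s" for s
  have cont: "continuous_on {a..x} dy" "continuous_on {a..x} dv" "continuous_on {a..x} p"
    using picard_continuous[OF p, of a x k] picard_continuous[OF p, of a x "Suc k"] p
    unfolding dy_def dv_def
    by (auto intro!: continuous_intros intro: continuous_on_subset simp del: picard.simps)
  have "\<bar>integral {a..x} dv\<bar> + \<bar>integral {a..x} (\<lambda>s. p s * dy s)\<bar>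
      \<le> integral {a..x} (\<lambda>s. \<bar>dv s\<bar>) + integral {a..x} (\<lambda>s. K * \<bar>dy s\<bar>)"
  proof (intro add_mono)
    show "\<bar>integral {a..x} dv\<bar> \<le> integral {a..x} (\<lambda>s. \<bar>dv s\<bar>)"
      using integral_norm_bound_integral[of dv "{a..x}" "\<lambda>s. \<bar>dv s\<bar>"] cont
      by (simp add: integrable_continuous_real continuous_intros)
    show "\<bar>integral {a..x} (\<lambda>s. p s * dy s)\<bar> \<le> integral {a..x} (\<lambda>s. K * \<bar>dy s\<bar>)"
      using integral_norm_bound_integral[of "\<lambda>s. p s * dy s" "{a..x}" "\<lambda>s. K * \<bar>dy s\<bar>"] cont bound
      by (simp add: integrable_continuous_real continuous_intros abs_mult mult_right_mono)
  qed
  also have "\<dots> = integral {a..x} (\<lambda>s. \<bar>dv s\<bar> + K * \<bar>dy s\<bar>)"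
    using cont by (simp add: integral_add integrable_continuous_real continuous_intros)
  also have "\<dots> \<le> integral {a..x} (\<lambda>s. (1 + K) * (((1 + K) * (s - a)) ^ Suc k / fact (Suc k)))"
  proof (rule integral_le)
    fix s assume s: "s \<in> {a..x}"
    have "\<bar>dv s\<bar> + K * \<bar>dy s\<bar> \<le> (1 + K) * (\<bar>dy s\<bar> + \<bar>dv s\<bar>)"
      using \<open>0 \<le> K\<close> by (simp add: algebra_simps)
    also have "\<dots> \<le> (1 + K) * (((1 + K) * (s - a)) ^ Suc k / fact (Suc k))"
      using Suc.IH[of s] s \<open>0 \<le> K\<close> unfolding dy_def dv_def by (intro mult_left_mono) auto
    finally show "\<bar>dv s\<bar> + K * \<bar>dy s\<bar> \<le> (1 + K) * (((1 + K) * (s - a)) ^ Suc k / fact (Suc k))" .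
  qed (use cont in \<open>auto intro!: integrable_continuous_real continuous_intros\<close>)
  also have "\<dots> = ((1 + K) * (x - a)) ^ Suc (Suc k) / fact (Suc (Suc k))"
    using has_integral_power_div_fact[OF Suc.prems] by (rule integral_unique)
  finally show ?case unfolding picard_Suc_diff[OF p] dy_def dv_def .
qed

lemma picard_uniform_limit:
  assumes p: "continuous_on UNIV p" and bound: "\<And>t. a \<le> t \<Longrightarrow> \<bar>p t\<bar> \<le> K"
  obtains Y V where "\<And>b. uniform_limit {a..b} (\<lambda>n. fst (picard p a n)) Y sequentially"
    and "\<And>b. uniform_limit {a..b} (\<lambda>n. snd (picard p a n)) V sequentially"
proof -
  have "0 \<le> K" using bound[of a] by auto
  define dy where "dy i x = fst (picard p a (Suc i)) x - fst (picard p a i) x" for i x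
  define dv where "dv i x = snd (picard p a (Suc i)) x - snd (picard p a i) x" for i x
  have telescope: "(\<lambda>n x. \<Sum>i<n. dy i x) = (\<lambda>n. fst (picard p a n))"
      "(\<lambda>n x. 1 + (\<Sum>i<n. dv i x)) = (\<lambda>n. snd (picard p a n))"
    unfolding dy_def dv_def
    by (simp_all only: sum_lessThan_telescope[of "\<lambda>i. fst (picard p a i) _"]
        sum_lessThan_telescope[of "\<lambda>i. snd (picard p a i) _"]) (auto simp del: picard.simps(2))
  have "uniform_limit {a..b} (\<lambda>n x. \<Sum>i<n. dy i x) (\<lambda>x. \<Sum>i. dy i x) sequentially \<and>
        uniform_limit {a..b} (\<lambda>n x. \<Sum>i<n. dv i x) (\<lambda>x. \<Sum>i. dv i x) sequentially" for b
  proof -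
    define M where "M i = ((1 + K) * (b - a)) ^ Suc i / fact (Suc i)" for i
    have "summable (\<lambda>n. ((1 + K) * (b - a)) ^ n / fact n)"
      using summable_exp_generic[of "(1 + K) * (b - a)"] by (simp add: divide_inverse mult.commute)
    then have "summable M" unfolding M_def by (subst summable_Suc_iff)
    moreover have "\<bar>dy i x\<bar> \<le> M i \<and> \<bar>dv i x\<bar> \<le> M i" if x: "x \<in> {a..b}" for i x
    proof -
      have "\<bar>dy i x\<bar> + \<bar>dv i x\<bar> \<le> ((1 + K) * (x - a)) ^ Suc i / fact (Suc i)"
        unfolding dy_def dv_def using picard_step_bound[OF p bound \<open>0 \<le> K\<close>] x by simp
      also have "\<dots> \<le> M i" unfolding M_def
        using x \<open>0 \<le> K\<close> by (intro divide_right_mono power_mono mult_left_mono) auto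
      finally show ?thesis using abs_ge_zero[of "dy i x"] abs_ge_zero[of "dv i x"] by linarith
    qed
    ultimately show ?thesis by (auto intro!: Weierstrass_m_test)
  qed
  then show ?thesis
    by (intro that[of "\<lambda>x. \<Sum>i. dy i x" "\<lambda>x. 1 + (\<Sum>i. dv i x)"])
      (simp_all flip: telescope add: uniform_limit_add uniform_limit_const)
qed

lemma integral_equation_imp_shooting_solution:
  assumes p: "continuous_on UNIV p"
    and cont: "\<And>b. continuous_on {a..b} y" "\<And>b. continuous_on {a..b} v"
    and eq_y: "\<And>x. a \<le> x \<Longrightarrow> y x = integral {a..x} v"
    and eq_v: "\<And>x. a \<le> x \<Longrightarrow> v x = 1 + integral {a..x} (\<lambda>s. p s * y s)"
  shows "shooting_solution p a y v"
proof -
  have "(y has_real_derivative v t) (at t within {a..}) \<and>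
        (v has_real_derivative p t * y t) (at t within {a..})" if "a \<le> t" for t
  proof -
    have within: "at t within {a..t + 1} = at t within {a..}"
      by (rule at_within_nhd[where S = "{t - 1<..<t + 1}"]) auto
    have "((\<lambda>x. integral {a..x} v) has_real_derivative v t) (at t within {a..t + 1})"
      using cont that by (intro integral_has_real_derivative) auto
    then have "(y has_real_derivative v t) (at t within {a..t + 1})"
      by (rule has_field_derivative_transform_within[OF _ zero_less_one]) (use that eq_y in auto)
    moreover have "((\<lambda>x. 1 + integral {a..x} (\<lambda>s. p s * y s)) has_real_derivative p t * y t)
        (at t within {a..t + 1})"
      using integral_has_real_derivative[of a "t + 1" "\<lambda>s. p s * y s" t] p cont that
      by (auto intro!: derivative_eq_intros continuous_intros intro: continuous_on_subset)
    then have "(v has_real_derivative p t * y t) (at t within {a..t + 1})"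
      by (rule has_field_derivative_transform_within[OF _ zero_less_one]) (use that eq_v in auto)
    ultimately show ?thesis unfolding within by blast
  qed
  moreover have "y a = 0" "v a = 1" using eq_y[of a] eq_v[of a] by simp_all
  ultimately show ?thesis by (simp add: shooting_solution_def)
qed

lemma shooting_solution_exists:
  assumes p: "continuous_on UNIV p" and bound: "\<And>t. a \<le> t \<Longrightarrow> \<bar>p t\<bar> \<le> K"
  obtains y v where "shooting_solution p a y v"
proof -
  obtain Y V where limY: "\<And>b. uniform_limit {a..b} (\<lambda>n. fst (picard p a n)) Y sequentially"
    and limV: "\<And>b. uniform_limit {a..b} (\<lambda>n. snd (picard p a n)) V sequentially"
    using picard_uniform_limit[OF p bound] by blast
  have contY: "continuous_on {a..b} Y" and contV: "continuous_on {a..b} V" for b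
    using uniform_limit_theorem[OF _ limY] uniform_limit_theorem[OF _ limV] picard_continuous[OF p]
    by (auto intro!: always_eventually)
  have limit_integral: "(\<lambda>n. integral {a..x} (f n)) \<longlonglongrightarrow> integral {a..x} g"
    if lim: "uniform_limit {a..x} f g sequentially" and cont: "\<And>n. continuous_on {a..x} (f n)"
    for x and f :: "nat \<Rightarrow> real \<Rightarrow> real" and g
  proof -
    obtain I J where I: "\<And>n. (f n has_integral I n) {a..x}" and J: "(g has_integral J) {a..x}"
      and "I \<longlonglongrightarrow> J"
      using uniform_limit_integral[OF lim cont] by auto
    moreover have "(\<lambda>n. integral {a..x} (f n)) = I" using I by (auto intro: integral_unique)
    ultimately show ?thesis using integral_unique[OF J] by simp
  qed
  have "Y x = integral {a..x} V \<and> V x = 1 + integral {a..x} (\<lambda>s. p s * Y s)" if "a \<le> x" for x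
  proof -
    have "(\<lambda>n. fst (picard p a n) x) \<longlonglongrightarrow> Y x" "(\<lambda>n. snd (picard p a n) x) \<longlonglongrightarrow> V x"
      using limY[of x] limV[of x] that by (auto intro: tendsto_uniform_limitI)
    moreover have "(\<lambda>n. fst (picard p a (Suc n)) x) \<longlonglongrightarrow> integral {a..x} V"
      using limit_integral[OF limV] picard_continuous[OF p] by simp
    moreover have "(\<lambda>n. snd (picard p a (Suc n)) x) \<longlonglongrightarrow> 1 + integral {a..x} (\<lambda>s. p s * Y s)"
    proof -
      have "continuous_on {a..x} p" using p by (rule continuous_on_subset) simp
      then have "bounded (p ` {a..x})" "bounded (Y ` {a..x})"
        using contY by (auto intro!: compact_imp_bounded compact_continuous_image)
      from uniform_lim_mult[OF uniform_limit_const limY this]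
      have "uniform_limit {a..x} (\<lambda>n s. p s * fst (picard p a n) s) (\<lambda>s. p s * Y s) sequentially" .
      from limit_integral[OF this] show ?thesis
        using picard_continuous[OF p] \<open>continuous_on {a..x} p\<close> by (auto intro!: tendsto_add continuous_intros)
    qed
    ultimately show ?thesis by (auto dest: LIMSEQ_Suc intro: LIMSEQ_unique)
  qed
  then have "shooting_solution p a Y V"
    using p contY contV by (intro integral_equation_imp_shooting_solution) auto
  then show ?thesis by (rule that)
qed

lemma shooting_solution_initial:
  "shooting_solution p a y v \<Longrightarrow> y a = 0"
  "shooting_solution p a y v \<Longrightarrow> v a = 1"
  by (simp_all add: shooting_solution_def)

lemma shooting_solution_deriv_within:
  assumes "shooting_solution p a y v" and "t \<in> {a..d}"
  shows "(y has_real_derivative v t) (at t within {a..d})"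
    and "(v has_real_derivative p t * y t) (at t within {a..d})"
  using assms by (auto simp: shooting_solution_def intro: has_field_derivative_subset)

lemma shooting_solution_deriv_at:
  assumes "shooting_solution p a y v" and "a < t"
  shows "(y has_real_derivative v t) (at t)"
    and "(v has_real_derivative p t * y t) (at t)"
proof -
  have "at t within {a..} = at t" using \<open>a < t\<close> by (intro at_within_interior) simp
  moreover have "(y has_real_derivative v t) (at t within {a..})"
    "(v has_real_derivative p t * y t) (at t within {a..})"
    using assms by (auto simp: shooting_solution_def)
  ultimately show "(y has_real_derivative v t) (at t)" "(v has_real_derivative p t * y t) (at t)"
    by simp_all
qed

lemma shooting_solution_continuous_on:
  assumes "shooting_solution p a y v"
  shows "continuous_on {a..d} y"
  using shooting_solution_deriv_within(1)[OF assms] by (intro DERIV_continuous_on) auto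

lemma shooting_solution_energy_bound:
  assumes sol: "shooting_solution p a y v" and bound: "\<And>t. a \<le> t \<Longrightarrow> \<bar>p t\<bar> \<le> K" and "a \<le> x"
  shows "(y x)\<^sup>2 + (v x)\<^sup>2 \<le> exp ((2 + K) * (x - a))"
proof -
  have "0 \<le> K" using bound[of a] by simp
  have "(y x)\<^sup>2 + (v x)\<^sup>2 \<le> ((y a)\<^sup>2 + (v a)\<^sup>2 + 0\<^sup>2 * (x - a)) * exp ((2 + K) * (x - a))"
  proof (rule second_order_energy_bound[where z = "\<lambda>t. p t * y t", OF _ _ _ \<open>0 \<le> K\<close>])
    fix t assume "t \<in> {a..x}"
    then show "\<bar>p t * y t\<bar> \<le> K * \<bar>y t\<bar> + 0"
      using bound[of t] by (simp add: abs_mult mult_right_mono)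
  qed (use sol \<open>a \<le> x\<close> in \<open>auto intro: shooting_solution_deriv_within\<close>)
  then show ?thesis using sol by (simp add: shooting_solution_initial)
qed

lemma shooting_solution_abs_le:
  assumes sol: "shooting_solution p a y v" and bound: "\<And>t. a \<le> t \<Longrightarrow> \<bar>p t\<bar> \<le> K"
    and x: "x \<in> {a..b}"
  shows "\<bar>y x\<bar> \<le> exp ((2 + K) * (b - a))"
proof -
  have "0 \<le> K" using bound[of a] by simp
  have "(y x)\<^sup>2 \<le> (y x)\<^sup>2 + (v x)\<^sup>2" by simp
  also have "\<dots> \<le> exp ((2 + K) * (x - a))"
    using shooting_solution_energy_bound[OF sol bound, of x] x by simp
  also have "\<dots> \<le> exp ((2 + K) * (b - a))"
    using x \<open>0 \<le> K\<close> by (simp add: mult_left_mono)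
  finally have sq: "(y x)\<^sup>2 \<le> exp ((2 + K) * (b - a))" .
  show ?thesis
  proof (cases "\<bar>y x\<bar> \<le> 1")
    case True
    moreover have "1 \<le> exp ((2 + K) * (b - a))" using x \<open>0 \<le> K\<close> by simp
    ultimately show ?thesis by linarith
  next
    case False
    then have "\<bar>y x\<bar> * 1 \<le> \<bar>y x\<bar> * \<bar>y x\<bar>" by (intro mult_left_mono) auto
    then have "\<bar>y x\<bar> \<le> (y x)\<^sup>2" by (simp add: power2_eq_square abs_mult_self_eq)
    with sq show ?thesis by linarith
  qed
qed

lemma shooting_solution_unique:
  assumes sol: "shooting_solution p a y v" and sol': "shooting_solution p a y' v'"
    and bound: "\<And>t. a \<le> t \<Longrightarrow> \<bar>p t\<bar> \<le> K" and "a \<le> x"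
  shows "y x = y' x"
proof -
  have "y x - y' x = 0"
  proof (rule second_order_unique_forward[where c = a and d = x and w = "\<lambda>t. y t - y' t"
        and u = "\<lambda>t. v t - v' t"
        and z = "\<lambda>t. p t * (y t - y' t)" and L = K])
    fix t assume t: "t \<in> {a..x}"
    show "((\<lambda>t. y t - y' t) has_real_derivative v t - v' t) (at t within {a..x})"
      using shooting_solution_deriv_within(1)[OF sol t] shooting_solution_deriv_within(1)[OF sol' t]
      by (rule DERIV_diff)
    show "((\<lambda>t. v t - v' t) has_real_derivative p t * (y t - y' t)) (at t within {a..x})"
      using DERIV_diff[OF shooting_solution_deriv_within(2)[OF sol t]
          shooting_solution_deriv_within(2)[OF sol' t]]
      by (simp add: right_diff_distrib)
    show "\<bar>p t * (y t - y' t)\<bar> \<le> K * \<bar>y t - y' t\<bar>"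
      using bound[of t] t by (simp add: abs_mult mult_right_mono)
  qed (use bound[of a] sol sol' \<open>a \<le> x\<close> in \<open>auto simp: shooting_solution_initial\<close>)
  then show ?thesis by simp
qed

lemma shooting_solution_zero_simple:
  assumes sol: "shooting_solution p a y v" and bound: "\<And>t. a \<le> t \<Longrightarrow> \<bar>p t\<bar> \<le> K"
    and "a < x" and "y x = 0"
  shows "v x \<noteq> 0"
proof
  assume "v x = 0"
  have "0 \<le> K" using bound[of a] by simp
  have "y a = 0 \<and> v a = 0"
  proof (rule second_order_unique_backward[where c = a and d = x and w = y and u = v
        and z = "\<lambda>t. p t * y t" and L = K])
    fix t assume t: "t \<in> {a..x}"
    show "\<bar>p t * y t\<bar> \<le> K * \<bar>y t\<bar>"
      using bound[of t] t by (simp add: abs_mult mult_right_mono)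
  qed (use \<open>0 \<le> K\<close> sol assms \<open>v x = 0\<close> in \<open>auto intro: shooting_solution_deriv_within\<close>)
  then show False using sol by (simp add: shooting_solution_initial)
qed

lemma shooting_solution_nonneg_coeff_nonzero:
  assumes sol: "shooting_solution p a y v" and nonneg: "\<And>t. a \<le> t \<Longrightarrow> 0 \<le> p t" and "a < x"
  shows "y x \<noteq> 0"
proof
  assume "y x = 0"
  have dy: "(y has_real_derivative v t) (at t within {a..x})"
    and dv: "(v has_real_derivative p t * y t) (at t within {a..x})" if "t \<in> {a..x}" for t
    using shooting_solution_deriv_within[OF sol that] by simp_all
  have yv: "0 \<le> y t * v t" if t: "t \<in> {a..x}" for t
  proof -
    have "y a * v a \<le> y t * v t"
    proof (rule has_real_derivative_nonneg_imp_le[OF _ _ t])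
      fix s assume s: "s \<in> {a..x}"
      show "((\<lambda>t. y t * v t) has_real_derivative v s * v s + y s * (p s * y s)) (at s within {a..x})"
        using dy[OF s] dv[OF s] by (auto intro!: derivative_eq_intros)
      show "0 \<le> v s * v s + y s * (p s * y s)"
        using nonneg[of s] s by (simp add: mult.left_commute[of "y s"])
    qed
    then show ?thesis using sol by (simp add: shooting_solution_initial)
  qed
  have v_ne: "v t \<noteq> 0" if t: "t \<in> {a..x}" for t
  proof -
    have "v a * v a \<le> v t * v t"
    proof (rule has_real_derivative_nonneg_imp_le[OF _ _ t])
      fix s assume s: "s \<in> {a..x}"
      show "((\<lambda>t. v t * v t) has_real_derivative 2 * p s * (y s * v s)) (at s within {a..x})"
        using dv[OF s] by (auto intro!: derivative_eq_intros simp: algebra_simps)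
      show "0 \<le> 2 * p s * (y s * v s)" using nonneg[of s] yv[OF s] s by simp
    qed
    then show ?thesis using sol by (auto simp: shooting_solution_initial)
  qed
  obtain t where "t \<in> {a<..<x}" "y x - y a = v t * (x - a)"
    using mvt_simple[OF \<open>a < x\<close>, of y "\<lambda>t h. v t * h"] dy
    by (auto simp: has_field_derivative_def)
  then show False using v_ne[of t] \<open>y x = 0\<close> \<open>a < x\<close> sol by (simp add: shooting_solution_initial)
qed

lemma shooting_solution_pos_near_start:
  assumes sol: "shooting_solution p a y v" and bound: "\<And>t. a \<le> t \<Longrightarrow> \<bar>p t\<bar> \<le> K"
    and x: "a < x" "x \<le> a + 1 / (2 * (K * exp (2 + K) + 1))"
  shows "0 < y x"
proof -
  define M where "M = K * exp (2 + K)"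
  have "0 \<le> K" using bound[of a] by simp
  then have "0 \<le> M" by (simp add: M_def)
  have "1 / (2 * (M + 1)) \<le> 1" using \<open>0 \<le> M\<close> by (simp add: field_simps)
  then have "x \<le> a + 1" using x unfolding M_def by linarith
  have v_pos: "0 < v t" if t: "t \<in> {a..x}" for t
  proof -
    have "norm (v t - v a) \<le> M * norm (t - a)"
    proof (rule field_differentiable_bound[where S = "{a..t}" and f' = "\<lambda>s. p s * y s"])
      fix s assume s: "s \<in> {a..t}"
      then show "(v has_real_derivative p s * y s) (at s within {a..t})"
        by (rule shooting_solution_deriv_within(2)[OF sol])
      have "\<bar>y s\<bar> \<le> exp ((2 + K) * (a + 1 - a))"
        using shooting_solution_abs_le[OF sol bound, of s "a + 1"] s t \<open>x \<le> a + 1\<close> by simp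
      then show "norm (p s * y s) \<le> M"
        using bound[of s] s \<open>0 \<le> K\<close> unfolding M_def by (auto simp: abs_mult intro: mult_mono)
    qed (use t in auto)
    also have "\<dots> \<le> M * (1 / (2 * (M + 1)))"
      using t x \<open>0 \<le> M\<close> unfolding M_def by (intro mult_left_mono) auto
    also have "\<dots> < 1"
      using \<open>0 \<le> M\<close> by (simp add: field_simps)
    finally show ?thesis using sol by (simp add: shooting_solution_initial)
  qed
  obtain t where "t \<in> {a<..<x}" "y x - y a = v t * (x - a)"
    using mvt_simple[OF \<open>a < x\<close>, of y "\<lambda>t h. v t * h"] shooting_solution_deriv_within(1)[OF sol]
    by (auto simp: has_field_derivative_def)
  with v_pos[of t] \<open>a < x\<close> sol show ?thesis by (simp add: shooting_solution_initial)
qed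

lemma shooting_solution_dependence:
  assumes sol: "shooting_solution p a y v" and sol': "shooting_solution q a y' v'"
    and bound: "\<And>t. a \<le> t \<Longrightarrow> \<bar>p t\<bar> \<le> K" and bound': "\<And>t. a \<le> t \<Longrightarrow> \<bar>q t\<bar> \<le> K"
    and close: "\<And>t. a \<le> t \<Longrightarrow> \<bar>p t - q t\<bar> \<le> \<delta>" and x: "x \<in> {a..b}"
  shows "(y x - y' x)\<^sup>2 \<le> \<delta>\<^sup>2 * ((b - a) * exp (3 * (2 + K) * (b - a)))"
proof -
  define B where "B = exp ((2 + K) * (b - a))"
  have "0 \<le> K" using bound[of a] by simp
  have "0 \<le> \<delta>" using close[of a] by simp
  have "(y x - y' x)\<^sup>2 + (v x - v' x)\<^sup>2
      \<le> ((y a - y' a)\<^sup>2 + (v a - v' a)\<^sup>2 + (\<delta> * B)\<^sup>2 * (x - a)) * exp ((2 + K) * (x - a))"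
  proof (rule second_order_energy_bound[where c = a and d = b and w = "\<lambda>t. y t - y' t"
        and u = "\<lambda>t. v t - v' t" and z = "\<lambda>t. p t * y t - q t * y' t", OF _ _ _ \<open>0 \<le> K\<close> x])
    fix t assume t: "t \<in> {a..b}"
    show "((\<lambda>t. y t - y' t) has_real_derivative v t - v' t) (at t within {a..b})"
      using shooting_solution_deriv_within(1)[OF sol t] shooting_solution_deriv_within(1)[OF sol' t]
      by (rule DERIV_diff)
    show "((\<lambda>t. v t - v' t) has_real_derivative p t * y t - q t * y' t) (at t within {a..b})"
      using shooting_solution_deriv_within(2)[OF sol t] shooting_solution_deriv_within(2)[OF sol' t]
      by (rule DERIV_diff)
    have "\<bar>p t * y t - q t * y' t\<bar> = \<bar>p t * (y t - y' t) + (p t - q t) * y' t\<bar>"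
      by (simp add: algebra_simps)
    also have "\<dots> \<le> \<bar>p t\<bar> * \<bar>y t - y' t\<bar> + \<bar>p t - q t\<bar> * \<bar>y' t\<bar>"
      by (metis abs_mult abs_triangle_ineq)
    also have "\<dots> \<le> K * \<bar>y t - y' t\<bar> + \<delta> * B"
      using bound[of t] close[of t] shooting_solution_abs_le[OF sol' bound' t] t \<open>0 \<le> \<delta>\<close>
      unfolding B_def by (intro add_mono mult_mono mult_right_mono) auto
    finally show "\<bar>p t * y t - q t * y' t\<bar> \<le> K * \<bar>y t - y' t\<bar> + \<delta> * B" .
  qed
  also have "\<dots> = (\<delta> * B)\<^sup>2 * (x - a) * exp ((2 + K) * (x - a))"
    using sol sol' by (simp add: shooting_solution_initial)
  also have "\<dots> \<le> (\<delta> * B)\<^sup>2 * (b - a) * B"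
    using x \<open>0 \<le> K\<close> unfolding B_def by (intro mult_mono) (auto simp: mult_left_mono)
  also have "\<dots> = \<delta>\<^sup>2 * ((b - a) * exp (3 * (2 + K) * (b - a)))"
    unfolding B_def by (simp add: power2_eq_square algebra_simps flip: exp_add)
  finally show ?thesis by (smt (verit) zero_le_power2)
qed

section \<open>Stationary solutions and the linearization\<close>

lemma indefinite_integral_has_real_derivative:
  assumes cont: "continuous_on UNIV h"
    and int: "\<And>a b. a \<le> b \<Longrightarrow> (h has_integral (f b - f a)) {a..b}"
  shows "(f has_real_derivative h x) (at x)"
proof -
  have "((\<lambda>y. f (x - 1) + integral {x - 1..y} h) has_real_derivative h x) (at x within {x - 1..x + 1})"
    using integral_has_real_derivative[OF continuous_on_subset[OF cont], of "x - 1" "x + 1" x]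
    by (auto intro!: derivative_eq_intros)
  then have "(f has_real_derivative h x) (at x within {x - 1..x + 1})"
  proof (rule has_field_derivative_transform_within[OF _ zero_less_one])
    fix y assume "y \<in> {x - 1..x + 1}"
    then show "f (x - 1) + integral {x - 1..y} h = f y"
      using integral_unique[OF int[of "x - 1" y]] by simp
  qed simp
  then show ?thesis by (simp add: at_within_Icc_at)
qed

lemma stationary_solution_classical:
  assumes "0 < D" and "stationary_solution D \<kappa> U"
  defines "I \<equiv> integral {0..1} (\<lambda>y. exp (U y))"
  obtains U' where "\<And>x. U (x + 1) = U x" and "\<And>x. (U has_real_derivative U' x) (at x)"
    and "\<And>x. (U' has_real_derivative (U x - \<kappa> * exp (U x) / I) / D) (at x)"
proof -
  obtain g where "per_weak_dd U g"
    and ae: "AE x in lebesgue. D * g x - U x + \<kappa> * exp (U x) / I = 0"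
    using assms(2) unfolding stationary_solution_def I_def by blast
  then obtain U' where per: "\<And>x. U (x + 1) = U x"
    and dU: "\<And>x. (U has_vector_derivative U' x) (at x)"
    and g: "\<And>a b. a \<le> b \<Longrightarrow> (g has_integral (U' b - U' a)) {a..b}"
    unfolding per_weak_dd_def by blast
  define h where "h x = (U x - \<kappa> * exp (U x) / I) / D" for x
  have dU': "(U has_real_derivative U' x) (at x)" for x
    using dU by (simp add: has_real_derivative_iff_has_vector_derivative)
  then have "continuous_on UNIV U"
    by (intro continuous_at_imp_continuous_on) (auto intro: DERIV_isCont)
  then have cont_h: "continuous_on S h" for S
    unfolding h_def divide_inverse by (auto intro!: continuous_intros intro: continuous_on_subset)
  have "AE x in lebesgue. g x = h x"
    using ae
  proof eventually_elim
    fix x assume "D * g x - U x + \<kappa> * exp (U x) / I = 0"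
    then have "D * g x = U x - \<kappa> * exp (U x) / I" by linarith
    then show "g x = h x" using \<open>0 < D\<close> unfolding h_def by (simp add: eq_divide_eq mult.commute)
  qed
  then obtain N where N: "{x \<in> space lebesgue. g x \<noteq> h x} \<subseteq> N" "emeasure lebesgue N = 0"
      "N \<in> sets lebesgue"
    by (rule AE_E)
  then have "negligible N" by (simp add: negligible_iff_null_sets null_setsI)
  then have "negligible {x. g x \<noteq> h x}"
    by (rule negligible_subset) (use N(1) in auto)
  then have h_int: "(h has_integral (U' b - U' a)) {a..b}" if "a \<le> b" for a b
    by (rule has_integral_spike[OF _ _ g[OF that]]) auto
  have "(U' has_real_derivative h x) (at x)" for x
    using cont_h h_int by (rule indefinite_integral_has_real_derivative)
  then show ?thesis using per dU' that unfolding h_def by blast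
qed

lemma lin_eigenvalueI:
  fixes \<Phi> \<Phi>' \<Phi>'' :: "real \<Rightarrow> real"
  assumes periodic: "\<And>x. \<Phi> (x + 1) = \<Phi> x"
    and deriv: "\<And>x. (\<Phi> has_real_derivative \<Phi>' x) (at x)"
    and deriv2: "\<And>x. (\<Phi>' has_real_derivative \<Phi>'' x) (at x)"
    and cont: "continuous_on {0..1} \<Phi>''"
    and nonzero: "\<Phi> x0 \<noteq> 0"
    and orthogonal: "((\<lambda>y. exp (U y) * \<Phi> y) has_integral 0) {0..1}"
    and equation: "\<And>x. D * \<Phi>'' x + (\<kappa> * exp (U x) / integral {0..1} (\<lambda>y. exp (U y)) - 1) * \<Phi> x
      = \<mu> * \<Phi> x"
  shows "lin_eigenvalue D \<kappa> U (complex_of_real \<mu>)"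
proof -
  define \<phi> where "\<phi> x = complex_of_real (\<Phi> x)" for x
  define g where "g x = complex_of_real (\<Phi>'' x)" for x
  have "per_weak_dd \<phi> g"
    unfolding per_weak_dd_def
  proof (intro conjI exI[of _ "\<lambda>x. complex_of_real (\<Phi>' x)"] allI impI)
    show "\<phi> (x + 1) = \<phi> x" for x by (simp add: \<phi>_def periodic)
    show "(\<phi> has_vector_derivative complex_of_real (\<Phi>' x)) (at x)" for x
      unfolding \<phi>_def by (rule has_vector_derivative_of_real[OF deriv])
    show "(g has_integral complex_of_real (\<Phi>' b) - complex_of_real (\<Phi>' a)) {a..b}" if "a \<le> b" for a b
      using that has_vector_derivative_of_real[OF deriv2] unfolding g_def
      by (intro fundamental_theorem_of_calculus) (auto intro: has_vector_derivative_at_within)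
    show "(\<lambda>x. (norm (g x))\<^sup>2) integrable_on {0..1}"
      unfolding g_def using cont by (intro integrable_continuous_real continuous_intros) simp
  qed
  moreover have "\<phi> \<noteq> (\<lambda>_. 0)" using nonzero by (auto simp: \<phi>_def fun_eq_iff)
  moreover have "((\<lambda>y. complex_of_real (exp (U y)) * \<phi> y) has_integral 0) {0..1}"
    using has_integral_linear[OF orthogonal bounded_linear_of_real] by (simp add: \<phi>_def o_def)
  then have "integral {0..1} (\<lambda>y. complex_of_real (exp (U y)) * \<phi> y) = 0"
    by (rule integral_unique)
  moreover have "complex_of_real D * g x + complex_of_real (\<kappa> * exp (U x) / I - 1) * \<phi> x
      = complex_of_real \<mu> * \<phi> x" if "I = integral {0..1} (\<lambda>y. exp (U y))" for x I
    using arg_cong[OF equation[of x], of complex_of_real] that by (simp add: \<phi>_def g_def)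
  ultimately show ?thesis
    unfolding lin_eigenvalue_def Let_def by (intro exI[of _ \<phi>] exI[of _ g]) (auto intro: AE_I2)
qed

locale stationary_profile =
  fixes D \<kappa> I :: real and U U' :: "real \<Rightarrow> real"
  assumes D_pos: "0 < D"
    and periodic: "\<And>x. U (x + 1) = U x"
    and deriv: "\<And>x. (U has_real_derivative U' x) (at x)"
    and deriv2: "\<And>x. (U' has_real_derivative (U x - \<kappa> * exp (U x) / I) / D) (at x)"
begin

definition F :: "real \<Rightarrow> real" where "F u = (u - \<kappa> * exp u / I) / D"

definition pot :: "real \<Rightarrow> real" where "pot x = (1 - \<kappa> * exp (U x) / I) / D"

lemma deriv2_F: "(U' has_real_derivative F (U x)) (at x)"
  using deriv2 unfolding F_def .

lemma F_deriv: "(F has_real_derivative (1 - \<kappa> * exp u / I) / D) (at u)"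
  using DERIV_cdivide[OF DERIV_diff[OF DERIV_ident DERIV_cmult[where c = "\<kappa> / I", OF DERIV_exp]],
      where c = D]
  unfolding F_def by simp

lemma F_U_deriv: "((\<lambda>x. F (U x)) has_real_derivative pot x * U' x) (at x)"
  using DERIV_chain2[OF F_deriv deriv] unfolding pot_def .

lemma continuous_U: "continuous_on S U"
  using deriv by (intro continuous_at_imp_continuous_on) (auto intro: DERIV_isCont)

lemma continuous_pot: "continuous_on S pot"
  unfolding pot_def divide_inverse by (intro continuous_intros continuous_U)

lemma periodic_U': "U' (x + 1) = U' x"
  using periodic deriv by (rule periodic_derivative)

definition U_bound :: real where "U_bound = (SOME B. \<forall>x. \<bar>U x\<bar> \<le> B)"

lemma abs_U_le: "\<bar>U x\<bar> \<le> U_bound"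
proof -
  obtain B where "\<And>x. norm (U x) \<le> B"
    using periodic_bounded[OF continuous_U periodic] by blast
  then have "\<exists>B. \<forall>x. \<bar>U x\<bar> \<le> B" by auto
  then show ?thesis unfolding U_bound_def by (rule someI_ex[where P = "\<lambda>B. \<forall>x. \<bar>U x\<bar> \<le> B", THEN spec])
qed

definition Lip :: real where "Lip = (1 + \<bar>\<kappa> / I\<bar> * exp U_bound) / D"

lemma Lip_nonneg: "0 \<le> Lip"
  unfolding Lip_def using D_pos by simp

lemma abs_F_deriv_le:
  assumes "\<bar>u\<bar> \<le> U_bound"
  shows "\<bar>(1 - \<kappa> * exp u / I) / D\<bar> \<le> Lip"
proof -
  have "\<bar>1 - \<kappa> / I * exp u\<bar> \<le> 1 + \<bar>\<kappa> / I\<bar> * exp u"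
    using abs_triangle_ineq4[of 1 "\<kappa> / I * exp u"] by (simp add: abs_mult)
  also have "\<dots> \<le> 1 + \<bar>\<kappa> / I\<bar> * exp U_bound"
    using assms by (intro add_left_mono mult_left_mono) auto
  finally show ?thesis unfolding Lip_def using D_pos by (simp add: divide_right_mono)
qed

lemma abs_pot_le: "\<bar>pot x\<bar> \<le> Lip"
  unfolding pot_def using abs_F_deriv_le[OF abs_U_le] .

lemma F_U_lipschitz: "\<bar>F (U x) - F (U y)\<bar> \<le> Lip * \<bar>U x - U y\<bar>"
proof -
  have "norm (F (U x) - F (U y)) \<le> Lip * norm (U x - U y)"
  proof (rule field_differentiable_bound[where S = "{- U_bound..U_bound}"])
    fix u assume "u \<in> {- U_bound..U_bound}"
    then have "\<bar>u\<bar> \<le> U_bound" by auto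
    then show "norm ((1 - \<kappa> * exp u / I) / D) \<le> Lip"
      using abs_F_deriv_le[of u] by simp
  qed (use abs_U_le[of x] abs_U_le[of y] F_deriv in \<open>auto intro: has_field_derivative_at_within\<close>)
  then show ?thesis by simp
qed

lemma even_at_critical_point:
  assumes "U' a = 0"
  shows "U (2 * a - x) = U x"
  using second_order_reflection_symmetric[OF deriv deriv2_F _ Lip_nonneg, of 1 a x]
    F_U_lipschitz assms by simp

lemma even_at_critical_point_half:
  assumes "U' a = 0"
  shows "U (2 * a + 1 - x) = U x"
proof -
  have "U (2 * a + 1 - x) = U (2 * a - (x - 1))" by (simp add: algebra_simps)
  also have "\<dots> = U (x - 1)" by (rule even_at_critical_point[OF assms])
  also have "\<dots> = U x" using periodic[of "x - 1"] by simp
  finally show ?thesis .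
qed

lemma constant_at_equilibrium:
  assumes "U' a = 0" and "F (U a) = 0"
  shows "U x = U a"
proof -
  have "U x - U a = 0"
  proof (rule second_order_unique[where w = "\<lambda>x. U x - U a" and u = U' and z = "\<lambda>x. F (U x)"
        and L = Lip and m = a])
    show "((\<lambda>x. U x - U a) has_real_derivative U' t) (at t)" for t
      using DERIV_diff[OF deriv DERIV_const] by simp
    show "\<bar>F (U t)\<bar> \<le> Lip * \<bar>U t - U a\<bar>" for t
      using F_U_lipschitz[of t a] assms(2) by simp
  qed (use deriv2_F Lip_nonneg assms in auto)
  then show ?thesis by simp
qed

lemma close_critical_points:
  assumes "x1 \<in> {0..<1}" "x2 \<in> {0..<1}" "x3 \<in> {0..<1}"
    and "x1 \<noteq> x2" "x1 \<noteq> x3" "x2 \<noteq> x3"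
    and "U' x1 = 0" "U' x2 = 0" "U' x3 = 0"
  obtains a c where "a \<in> {0..<1}" "U' a = 0" "a < c" "c < a + 1/2" "U' c = 0"
proof -
  text \<open>Shift the other two critical points into the period (x1, x1 + 1); one of them differs from
    the midpoint x1 + 1/2, and reflecting it in that midpoint if necessary puts it within half a
    period to the right of x1.\<close>
  define shift where "shift z = (if x1 < z then z else z + 1)" for z
  have shifted: "shift z \<in> {x1<..<x1 + 1}" "U' (shift z) = 0"
    if "z \<in> {0..<1}" "z \<noteq> x1" "U' z = 0" for z
    using that assms(1) periodic_U'[of z] unfolding shift_def by auto
  have "shift x2 \<noteq> shift x3" using assms unfolding shift_def by auto
  then obtain t where t: "t \<in> {x1<..<x1 + 1}" "t \<noteq> x1 + 1/2" "U' t = 0"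
    using shifted[of x2] shifted[of x3] assms by metis
  have odd: "U' (2 * x1 + 1 - t) = - U' t"
  proof -
    have "((\<lambda>y. U (2 * x1 + 1 - y)) has_real_derivative U' t) (at t)"
      using deriv[of t] even_at_critical_point_half[OF \<open>U' x1 = 0\<close>] by simp
    moreover have "((\<lambda>y. 2 * x1 + 1 - y) has_real_derivative -1) (at t)"
      by (auto intro!: derivative_eq_intros)
    from DERIV_chain2[OF deriv this]
    have "((\<lambda>y. U (2 * x1 + 1 - y)) has_real_derivative - U' (2 * x1 + 1 - t)) (at t)"
      by simp
    ultimately show ?thesis using DERIV_unique by fastforce
  qed
  show ?thesis
  proof (cases "t < x1 + 1/2")
    case True
    then show ?thesis using t assms(1,7) by (intro that[of x1 t]) auto
  next
    case False
    then show ?thesis using t odd assms(1,7) by (intro that[of x1 "2 * x1 + 1 - t"]) auto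
  qed
qed

end

section \<open>The shooting argument\<close>

locale shooting = stationary_profile +
  fixes a c :: real
  assumes crit_a: "U' a = 0" and non_equilibrium: "F (U a) \<noteq> 0"
    and crit_c: "U' c = 0" and a_less_c: "a < c" and c_less: "c < a + 1/2"
begin

definition shot :: "real \<Rightarrow> real \<Rightarrow> real"
  where "shot l = fst (SOME yv. shooting_solution (\<lambda>t. l + pot t) a (fst yv) (snd yv))"

definition shot' :: "real \<Rightarrow> real \<Rightarrow> real"
  where "shot' l = snd (SOME yv. shooting_solution (\<lambda>t. l + pot t) a (fst yv) (snd yv))"

lemma shot_solution: "shooting_solution (\<lambda>t. l + pot t) a (shot l) (shot' l)"
proof -
  have "continuous_on UNIV (\<lambda>t. l + pot t)" by (intro continuous_intros continuous_pot)
  moreover have "\<bar>l + pot t\<bar> \<le> \<bar>l\<bar> + Lip" if "a \<le> t" for t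
    using abs_pot_le[of t] abs_triangle_ineq[of l "pot t"] by linarith
  ultimately obtain y v where "shooting_solution (\<lambda>t. l + pot t) a y v"
    by (rule shooting_solution_exists)
  then have "\<exists>yv. shooting_solution (\<lambda>t. l + pot t) a (fst yv) (snd yv)" by auto
  from someI_ex[OF this] show ?thesis unfolding shot_def shot'_def .
qed

definition l_max :: real where "l_max = Lip + 1"

definition coeff_bound :: real where "coeff_bound = l_max + Lip"

lemma l_max_pos: "0 < l_max"
  using Lip_nonneg unfolding l_max_def by linarith

lemma coeff_bound_pos: "0 < coeff_bound"
  unfolding coeff_bound_def l_max_def using Lip_nonneg by simp

lemma abs_coeff_le: "l \<in> {0..l_max} \<Longrightarrow> \<bar>l + pot t\<bar> \<le> coeff_bound"
  using abs_pot_le[of t] unfolding coeff_bound_def by auto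

lemma shot_0_eq: "a \<le> x \<Longrightarrow> shot 0 x = U' x / F (U a)"
proof (rule shooting_solution_unique[OF shot_solution _ abs_coeff_le])
  show "shooting_solution (\<lambda>t. 0 + pot t) a (\<lambda>x. U' x / F (U a)) (\<lambda>x. F (U x) / F (U a))"
    unfolding shooting_solution_def using crit_a non_equilibrium
    by (auto intro!: has_field_derivative_at_within DERIV_cdivide[OF deriv2_F, THEN DERIV_cong]
        DERIV_cdivide[OF F_U_deriv, THEN DERIV_cong])
qed (auto simp: l_max_def Lip_nonneg)

lemma shot_0_c: "shot 0 c = 0"
  using shot_0_eq[of c] a_less_c crit_c by simp

lemma shot_l_max_nonzero:
  assumes "a < x"
  shows "shot l_max x \<noteq> 0"
proof (rule shooting_solution_nonneg_coeff_nonzero[OF shot_solution _ assms])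
  show "0 \<le> l_max + pot t" for t
    using abs_pot_le[of t] by (simp add: l_max_def abs_le_iff)
qed

lemma shot_continuous_in_param:
  assumes l0: "l0 \<in> {0..l_max}" and "0 < \<epsilon>"
  obtains \<delta> where "0 < \<delta>"
    and "\<And>l x. l \<in> {0..l_max} \<Longrightarrow> \<bar>l - l0\<bar> < \<delta> \<Longrightarrow> x \<in> {a..a + 1/2} \<Longrightarrow>
      \<bar>shot l x - shot l0 x\<bar> < \<epsilon>"
proof -
  define C where "C = 1/2 * exp (3 * (2 + coeff_bound) * (1/2))"
  define \<delta> where "\<delta> = \<epsilon> / (C + 1)"
  have "0 < C" by (simp add: C_def)
  then have "0 < \<delta>" using \<open>0 < \<epsilon>\<close> by (simp add: \<delta>_def)
  have small: "\<delta>\<^sup>2 * C < \<epsilon>\<^sup>2"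
  proof -
    have "C + 1 \<le> (C + 1)\<^sup>2" using \<open>0 < C\<close> by (intro self_le_power) auto
    then have "\<epsilon>\<^sup>2 * C < \<epsilon>\<^sup>2 * (C + 1)\<^sup>2" using \<open>0 < \<epsilon>\<close> by simp
    moreover have "0 < (C + 1)\<^sup>2" using \<open>0 < C\<close> by simp
    ultimately have "\<epsilon>\<^sup>2 * C / (C + 1)\<^sup>2 < \<epsilon>\<^sup>2" by (simp add: divide_less_eq)
    then show ?thesis by (simp add: \<delta>_def power_divide)
  qed
  have "\<bar>shot l x - shot l0 x\<bar> < \<epsilon>"
    if l: "l \<in> {0..l_max}" "\<bar>l - l0\<bar> < \<delta>" and x: "x \<in> {a..a + 1/2}" for l x
  proof -
    have "(shot l x - shot l0 x)\<^sup>2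
        \<le> \<bar>l - l0\<bar>\<^sup>2 * ((a + 1/2 - a) * exp (3 * (2 + coeff_bound) * (a + 1/2 - a)))"
    proof (rule shooting_solution_dependence[OF shot_solution shot_solution _ _ _ x])
      show "\<bar>l + pot t\<bar> \<le> coeff_bound" for t using l(1) by (rule abs_coeff_le)
      show "\<bar>l0 + pot t\<bar> \<le> coeff_bound" for t using l0 by (rule abs_coeff_le)
      show "\<bar>l + pot t - (l0 + pot t)\<bar> \<le> \<bar>l - l0\<bar>" for t by simp
    qed
    also have "\<dots> = \<bar>l - l0\<bar>\<^sup>2 * C" by (simp add: C_def)
    also have "\<dots> \<le> \<delta>\<^sup>2 * C"
      using l \<open>0 < C\<close> by (intro mult_right_mono power_mono) auto
    also have "\<dots> < \<epsilon>\<^sup>2" by (rule small)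
    finally have "\<bar>shot l x - shot l0 x\<bar>\<^sup>2 < \<epsilon>\<^sup>2" by simp
    then show ?thesis by (rule power2_less_imp_less) (use \<open>0 < \<epsilon>\<close> in simp)
  qed
  with \<open>0 < \<delta>\<close> show ?thesis by (rule that)
qed

definition near_radius :: real
  where "near_radius = min (1/4) (1 / (2 * (coeff_bound * exp (2 + coeff_bound) + 1)))"

lemma near_radius_pos: "0 < near_radius"
proof -
  have "0 < coeff_bound * exp (2 + coeff_bound)" using coeff_bound_pos by simp
  then show ?thesis unfolding near_radius_def by simp
qed

lemma shot_pos_near_a:
  assumes "l \<in> {0..l_max}" and "a < x" and "x \<le> a + near_radius"
  shows "0 < shot l x"
  using assms by (intro shooting_solution_pos_near_start[OF shot_solution abs_coeff_le])
    (auto simp: near_radius_def)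

definition zero_params :: "real set"
  where "zero_params = {l \<in> {0..l_max}. \<exists>x\<in>{a<..<a + 1/2}. shot l x = 0}"

lemma zero_params_open:
  assumes "l0 \<in> zero_params"
  obtains \<delta> where "0 < \<delta>" "\<And>l. l \<in> {0..l_max} \<Longrightarrow> \<bar>l - l0\<bar> < \<delta> \<Longrightarrow> l \<in> zero_params"
proof -
  obtain x0 where x0: "x0 \<in> {a<..<a + 1/2}" "shot l0 x0 = 0" and l0: "l0 \<in> {0..l_max}"
    using assms by (auto simp: zero_params_def)
  have "shot' l0 x0 \<noteq> 0"
    by (rule shooting_solution_zero_simple[OF shot_solution abs_coeff_le[OF l0]]) (use x0 in auto)
  moreover have "0 < min (x0 - a) (a + 1/2 - x0)" using x0 by simp
  ultimately obtain x1 x2 where x12: "x0 - min (x0 - a) (a + 1/2 - x0) < x1" "x1 < x0" "x0 < x2"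
      "x2 < x0 + min (x0 - a) (a + 1/2 - x0)" and sign: "shot l0 x1 * shot l0 x2 < 0"
    using sign_change_at_simple_zero[OF shooting_solution_deriv_at(1)[OF shot_solution] x0(2)] x0
    by (metis greaterThanLessThan_iff)
  then have x12_in: "x1 \<in> {a<..<a + 1/2}" "x2 \<in> {a<..<a + 1/2}" by auto
  have "0 < min \<bar>shot l0 x1\<bar> \<bar>shot l0 x2\<bar>" using sign by auto
  from shot_continuous_in_param[OF l0 this] obtain \<delta> where "0 < \<delta>"
    and close: "\<And>l x. l \<in> {0..l_max} \<Longrightarrow> \<bar>l - l0\<bar> < \<delta> \<Longrightarrow> x \<in> {a..a + 1/2} \<Longrightarrow>
      \<bar>shot l x - shot l0 x\<bar> < min \<bar>shot l0 x1\<bar> \<bar>shot l0 x2\<bar>"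
    by blast
  show ?thesis
  proof (rule that[OF \<open>0 < \<delta>\<close>])
    fix l assume l: "l \<in> {0..l_max}" "\<bar>l - l0\<bar> < \<delta>"
    have "\<bar>shot l x - shot l0 x\<bar> < \<bar>shot l0 x\<bar>" if "x = x1 \<or> x = x2" for x
      using close[OF l(1) l(2), of x] that x12_in by auto
    then have "0 < shot l x1 * shot l0 x1" "0 < shot l x2 * shot l0 x2"
      using mult_pos_if_abs_diff_less by blast+
    with sign have "shot l x1 * shot l x2 < 0"
      by (auto simp: zero_less_mult_iff mult_less_0_iff)
    moreover have "continuous_on {x1..x2} (shot l)"
      by (rule continuous_on_subset[OF shooting_solution_continuous_on[OF shot_solution[of l], of x2]])
        (use x12_in in auto)
    ultimately obtain x where "x \<in> {x1..x2}" "shot l x = 0"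
      using product_neg_imp_zero[of x1 x2] x12 by auto
    then show "l \<in> zero_params" using l x12_in by (auto simp: zero_params_def)
  qed
qed

lemma zero_params_subset: "zero_params \<subseteq> {0..l_max}"
  by (auto simp: zero_params_def)

lemma zero_in_zero_params: "0 \<in> zero_params"
  unfolding zero_params_def using a_less_c c_less shot_0_c l_max_pos by auto

lemma l_max_notin_zero_params: "l_max \<notin> zero_params"
  using shot_l_max_nonzero by (auto simp: zero_params_def)

definition l_star :: real where "l_star = Sup zero_params"

lemma bdd_above_zero_params: "bdd_above zero_params"
  by (rule bdd_aboveI[of _ l_max]) (use zero_params_subset in auto)

lemma le_l_star: "l \<in> zero_params \<Longrightarrow> l \<le> l_star"
  unfolding l_star_def by (rule cSup_upper[OF _ bdd_above_zero_params])

lemma l_star_le_l_max: "l_star \<le> l_max"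
  unfolding l_star_def using zero_params_subset zero_in_zero_params by (intro cSup_least) auto

lemma l_star_pos: "0 < l_star"
proof -
  obtain \<delta> where "0 < \<delta>" and \<delta>: "\<And>l. l \<in> {0..l_max} \<Longrightarrow> \<bar>l - 0\<bar> < \<delta> \<Longrightarrow> l \<in> zero_params"
    using zero_params_open[OF zero_in_zero_params] by blast
  have "min (\<delta> / 2) l_max \<in> zero_params" using \<open>0 < \<delta>\<close> l_max_pos by (intro \<delta>) auto
  from le_l_star[OF this] show ?thesis using \<open>0 < \<delta>\<close> l_max_pos by simp
qed

lemma l_star_notin_zero_params: "l_star \<notin> zero_params"
proof
  assume l_star: "l_star \<in> zero_params"
  then have "l_star \<noteq> l_max" using l_max_notin_zero_params by auto
  with l_star_le_l_max have "l_star < l_max" by simp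
  obtain \<delta> where "0 < \<delta>" and \<delta>: "\<And>l. l \<in> {0..l_max} \<Longrightarrow> \<bar>l - l_star\<bar> < \<delta> \<Longrightarrow> l \<in> zero_params"
    using zero_params_open[OF l_star] by blast
  have "l_star + min (\<delta> / 2) (l_max - l_star) \<in> zero_params"
    using \<open>0 < \<delta>\<close> \<open>l_star < l_max\<close> l_star_pos by (intro \<delta>) auto
  from le_l_star[OF this] show False using \<open>0 < \<delta>\<close> \<open>l_star < l_max\<close> by simp
qed

lemma no_zero_params_open:
  assumes l0: "l0 \<in> {0..l_max}" and nonzero: "\<And>x. x \<in> {a<..a + 1/2} \<Longrightarrow> shot l0 x \<noteq> 0"
  obtains \<delta> where "0 < \<delta>" "\<And>l. l \<in> {0..l_max} \<Longrightarrow> \<bar>l - l0\<bar> < \<delta> \<Longrightarrow> l \<notin> zero_params"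
proof -
  define A where "A = a + near_radius"
  have A: "a < A" "A < a + 1/2" using near_radius_pos by (auto simp: A_def near_radius_def)
  have "continuous_on {A..a + 1/2} (shot l0)"
    by (rule continuous_on_subset[OF shooting_solution_continuous_on[OF shot_solution[of l0]]])
      (use A in auto)
  then have "continuous_on {A..a + 1/2} (\<lambda>x. \<bar>shot l0 x\<bar>)"
    by (intro continuous_intros)
  moreover have "{A..a + 1/2} \<noteq> {}" using A by simp
  ultimately obtain x0 where x0: "x0 \<in> {A..a + 1/2}"
    and min: "\<forall>x\<in>{A..a + 1/2}. \<bar>shot l0 x0\<bar> \<le> \<bar>shot l0 x\<bar>"
    using continuous_attains_inf[OF compact_Icc] by blast
  have "0 < \<bar>shot l0 x0\<bar>" using nonzero[of x0] x0 A by simp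
  from shot_continuous_in_param[OF l0 this] obtain \<delta> where "0 < \<delta>"
    and close: "\<And>l x. l \<in> {0..l_max} \<Longrightarrow> \<bar>l - l0\<bar> < \<delta> \<Longrightarrow> x \<in> {a..a + 1/2} \<Longrightarrow>
      \<bar>shot l x - shot l0 x\<bar> < \<bar>shot l0 x0\<bar>"
    by blast
  show ?thesis
  proof (rule that[OF \<open>0 < \<delta>\<close>])
    fix l assume l: "l \<in> {0..l_max}" "\<bar>l - l0\<bar> < \<delta>"
    have "shot l x \<noteq> 0" if x: "x \<in> {a<..<a + 1/2}" for x
    proof (cases "x \<le> A")
      case True
      then show ?thesis using shot_pos_near_a[OF l(1), of x] x by (simp add: A_def)
    next
      case False
      then have "\<bar>shot l0 x0\<bar> \<le> \<bar>shot l0 x\<bar>" using min x by auto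
      moreover have "\<bar>shot l x - shot l0 x\<bar> < \<bar>shot l0 x0\<bar>" using close[OF l, of x] x by simp
      ultimately show ?thesis by auto
    qed
    then show "l \<notin> zero_params" by (auto simp: zero_params_def)
  qed
qed

lemma shot_l_star_end: "shot l_star (a + 1/2) = 0"
proof (rule ccontr)
  assume end_nonzero: "shot l_star (a + 1/2) \<noteq> 0"
  have l_star: "l_star \<in> {0..l_max}" using l_star_pos l_star_le_l_max by simp
  have "shot l_star x \<noteq> 0" if "x \<in> {a<..a + 1/2}" for x
    using that end_nonzero l_star_notin_zero_params l_star
    by (cases "x = a + 1/2") (auto simp: zero_params_def)
  then obtain \<delta> where "0 < \<delta>"
    and \<delta>: "\<And>l. l \<in> {0..l_max} \<Longrightarrow> \<bar>l - l_star\<bar> < \<delta> \<Longrightarrow> l \<notin> zero_params"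
    using no_zero_params_open[OF l_star] by blast
  have "l_star - \<delta> < Sup zero_params" using \<open>0 < \<delta>\<close> by (simp add: l_star_def)
  then obtain l where l: "l \<in> zero_params" "l_star - \<delta> < l"
    using less_cSupD[of zero_params] zero_in_zero_params by blast
  then have "\<bar>l - l_star\<bar> < \<delta>" using le_l_star[OF l(1)] by simp
  then show False using \<delta>[of l] l(1) zero_params_subset by auto
qed

lemma pot_even: "pot (2 * a - x) = pot x"
  unfolding pot_def using even_at_critical_point[OF crit_a] by simp

definition Phi :: "real \<Rightarrow> real"
  where "Phi x = (if a \<le> x then shot l_star x else - shot l_star (2 * a - x))"

definition Phi' :: "real \<Rightarrow> real"
  where "Phi' x = (if a \<le> x then shot' l_star x else shot' l_star (2 * a - x))"

lemma Phi_deriv: "(Phi has_real_derivative Phi' x) (at x)"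
proof -
  have "((\<lambda>x. if a \<le> x then shot l_star x else - 1 * shot l_star (2 * a - x)) has_real_derivative
      (if a \<le> x then shot' l_star x else - (- 1) * shot' l_star (2 * a - x))) (at x)"
    using shot_solution[of l_star]
    by (intro reflected_extension_has_real_derivative) (auto simp: shooting_solution_def)
  moreover have "(\<lambda>x. if a \<le> x then shot l_star x else - 1 * shot l_star (2 * a - x)) = Phi"
    by (auto simp: Phi_def)
  moreover have "(if a \<le> x then shot' l_star x else - (- 1) * shot' l_star (2 * a - x)) = Phi' x"
    by (simp add: Phi'_def)
  ultimately show ?thesis by (simp only:)
qed

lemma Phi'_deriv: "(Phi' has_real_derivative (l_star + pot x) * Phi x) (at x)"
proof -
  have "((\<lambda>x. if a \<le> x then shot' l_star x else 1 * shot' l_star (2 * a - x)) has_real_derivative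
      (if a \<le> x then (l_star + pot x) * shot l_star x
       else - 1 * ((l_star + pot (2 * a - x)) * shot l_star (2 * a - x)))) (at x)"
    using shot_solution[of l_star]
    by (intro reflected_extension_has_real_derivative) (auto simp: shooting_solution_def)
  moreover have "(\<lambda>x. if a \<le> x then shot' l_star x else 1 * shot' l_star (2 * a - x)) = Phi'"
    by (auto simp: Phi'_def)
  moreover have "(if a \<le> x then (l_star + pot x) * shot l_star x
       else - 1 * ((l_star + pot (2 * a - x)) * shot l_star (2 * a - x))) = (l_star + pot x) * Phi x"
    by (simp add: Phi_def pot_even)
  ultimately show ?thesis by (simp only:)
qed

lemma pot_even_half: "pot (2 * a + 1 - x) = pot x"
  unfolding pot_def by (simp add: even_at_critical_point_half[OF crit_a])

lemma Phi_odd_half: "Phi (2 * a + 1 - x) = - Phi x"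
proof -
  have "Phi y = - 1 * Phi (2 * (a + 1/2) - y)" for y
  proof (rule second_order_reflection_symmetric[where L = "l_star + Lip", OF Phi_deriv Phi'_deriv])
    fix x
    have "\<bar>l_star + pot x\<bar> \<le> l_star + Lip" using abs_pot_le[of x] l_star_pos by linarith
    then have "\<bar>l_star + pot x\<bar> * \<bar>Phi x + Phi (2 * a + 1 - x)\<bar>
        \<le> (l_star + Lip) * \<bar>Phi x + Phi (2 * a + 1 - x)\<bar>"
      by (rule mult_right_mono) simp
    then show "\<bar>(l_star + pot x) * Phi x
          - - 1 * ((l_star + pot (2 * (a + 1/2) - x)) * Phi (2 * (a + 1/2) - x))\<bar>
        \<le> (l_star + Lip) * \<bar>Phi x - - 1 * Phi (2 * (a + 1/2) - x)\<bar>"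
      by (simp add: pot_even_half abs_mult[symmetric] distrib_left)
    show "0 \<le> l_star + Lip" using l_star_pos Lip_nonneg by simp
    show "Phi (a + 1/2) = - 1 * Phi (a + 1/2)" using shot_l_star_end by (simp add: Phi_def)
    show "Phi' (a + 1/2) = - (- 1) * Phi' (a + 1/2)" by simp
  qed
  from this[of "2 * a + 1 - x"] show ?thesis by simp
qed

lemma Phi_periodic: "Phi (x + 1) = Phi x"
proof -
  have "Phi (2 * a - x) = - Phi x"
  proof (cases "x = a")
    case True
    then show ?thesis
      using shooting_solution_initial(1)[OF shot_solution[of l_star]] by (simp add: Phi_def)
  qed (auto simp: Phi_def)
  then show ?thesis using Phi_odd_half[of "x + 1"] by simp
qed

lemma Phi_nonzero: "\<exists>x. Phi x \<noteq> 0"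
proof -
  have "0 < shot l_star (a + near_radius)"
    using l_star_pos l_star_le_l_max near_radius_pos by (intro shot_pos_near_a) auto
  then show ?thesis using near_radius_pos by (intro exI[of _ "a + near_radius"]) (simp add: Phi_def)
qed

lemma continuous_Phi: "continuous_on S Phi"
  using Phi_deriv by (intro continuous_at_imp_continuous_on) (auto intro: DERIV_isCont)

lemma weighted_integral_Phi:
  assumes "0 \<le> a" "a \<le> 1"
  shows "((\<lambda>y. exp (U y) * Phi y) has_integral 0) {0..1}"
proof (rule integral_periodic_odd[OF _ _ _ assms])
  show "continuous_on UNIV (\<lambda>y. exp (U y) * Phi y)"
    by (intro continuous_intros continuous_U continuous_Phi)
  show "exp (U (x + 1)) * Phi (x + 1) = exp (U x) * Phi x" for x
    by (simp add: periodic Phi_periodic)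
  show "exp (U (2 * a + 1 - x)) * Phi (2 * a + 1 - x) = - (exp (U x) * Phi x)" for x
    by (simp add: even_at_critical_point_half[OF crit_a] Phi_odd_half)
qed

lemma Phi_eigen_equation:
  "D * ((l_star + pot x) * Phi x) + (\<kappa> * exp (U x) / I - 1) * Phi x = D * l_star * Phi x"
proof -
  have "D * pot x = 1 - \<kappa> * exp (U x) / I" using D_pos by (simp add: pot_def)
  then have "D * ((l_star + pot x) * Phi x) = D * l_star * Phi x + (1 - \<kappa> * exp (U x) / I) * Phi x"
    by (simp add: distrib_left distrib_right mult.assoc[symmetric])
  then show ?thesis by (simp add: algebra_simps)
qed

lemma lin_eigenvalue_l_star:
  assumes "0 \<le> a" "a \<le> 1" and I: "I = integral {0..1} (\<lambda>y. exp (U y))"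
  shows "lin_eigenvalue D \<kappa> U (complex_of_real (D * l_star))"
proof -
  obtain x0 where "Phi x0 \<noteq> 0" using Phi_nonzero by blast
  show ?thesis
  proof (rule lin_eigenvalueI[OF Phi_periodic Phi_deriv Phi'_deriv _ \<open>Phi x0 \<noteq> 0\<close>])
    show "continuous_on {0..1} (\<lambda>x. (l_star + pot x) * Phi x)"
      by (intro continuous_intros continuous_pot continuous_Phi)
    show "((\<lambda>y. exp (U y) * Phi y) has_integral 0) {0..1}"
      using assms(1,2) by (rule weighted_integral_Phi)
    show "D * ((l_star + pot x) * Phi x) + (\<kappa> * exp (U x) / integral {0..1} (\<lambda>y. exp (U y)) - 1) * Phi x
        = D * l_star * Phi x" for x
      using Phi_eigen_equation unfolding I .
  qed
qed

end

theorem mainTheorem10: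
  fixes D \<kappa> :: real and U :: "real \<Rightarrow> real"
  assumes "D > 0" and "\<kappa> > 0"
    and "stationary_solution D \<kappa> U"
    and "\<not> (\<exists>c. \<forall>x. U x = c)"
    and "\<exists>x1 x2 x3. x1 \<in> {0..<1} \<and> x2 \<in> {0..<1} \<and> x3 \<in> {0..<1} \<and>
           x1 \<noteq> x2 \<and> x1 \<noteq> x3 \<and> x2 \<noteq> x3 \<and>
           deriv U x1 = 0 \<and> deriv U x2 = 0 \<and> deriv U x3 = 0"
  shows "linearly_unstable D \<kappa> U"
proof -
  define I where "I = integral {0..1} (\<lambda>y. exp (U y))"
  obtain U' where "stationary_profile D \<kappa> I U U'"
    using stationary_solution_classical[OF assms(1,3)] assms(1)
    unfolding stationary_profile_def I_def by metis
  then interpret stationary_profile D \<kappa> I U U' .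
  obtain x1 x2 x3 where "x1 \<in> {0..<1}" "x2 \<in> {0..<1}" "x3 \<in> {0..<1}"
    "x1 \<noteq> x2" "x1 \<noteq> x3" "x2 \<noteq> x3" "U' x1 = 0" "U' x2 = 0" "U' x3 = 0"
    using assms(5) DERIV_imp_deriv[OF deriv] by metis
  then obtain a c where a: "a \<in> {0..<1}" "U' a = 0" and c: "a < c" "c < a + 1/2" "U' c = 0"
    by (rule close_critical_points)
  have "F (U a) \<noteq> 0" using constant_at_equilibrium[OF \<open>U' a = 0\<close>] assms(4) by blast
  with a c interpret shooting D \<kappa> I U U' a c by unfold_locales
  have "lin_eigenvalue D \<kappa> U (complex_of_real (D * l_star))"
    using a by (intro lin_eigenvalue_l_star) (auto simp: I_def)
  then show ?thesis
    unfolding linearly_unstable_def using assms(1) l_star_pos by auto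
qed

end
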